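(* Let $t\ge2$, $n\ge1$, let $\lambda$ be a partition of length at most $tn+1$ and write $n_i=n_i(\lambda,tn+1)$. Then the following are equivalent: (a) there exists $i_0\in\{1,\dots,\lfloor t/2\rfloor\}$ such that $n_0=n$ and, for all $1\le i\le\lfloor t/2\rfloor$, $n_i+n_{t-i}=2n+1+\delta_{i_0,t/2}$ if $i=i_0$ and $n_i+n_{t-i}=2n$ otherwise; (b) the $t$-core of $\lambda$ is a $(1,0,k)$-asymmetric partition for some $1\le k\le\mathrm{rk}(\text{$t$-core of }\lambda)$.
   Context: For a partition $\lambda$ of length at most $\ell$, $\beta_i(\lambda,\ell)=\lambda_i+\ell-i$ and $n_i(\lambda,\ell)$ is the number of $\beta_j(\lambda,\ell)$ congruent to $i$ mod $t$ ($0\le i\le t-1$). The $t$-core is the usual one. Rank $\mathrm{rk}(\mu)=\max\{j:\mu_j\ge j\}$; Frobenius coordinates $(\alpha\mid\beta)$, $\alpha_i=\mu_i-i$, $\beta_i=\mu'_i-i$. For integers $z_1>z_2\ge0$ and $1\le k\le r=\mathrm{rk}(\mu)$, $\mu$ is $(z_1,z_2,k)$-asymmetric if $\mu=(\alpha_1,\dots,\alpha_r\mid\alpha_1+z_1,\dots,\widehat{\alpha_k+z_1},\dots,\alpha_r+z_1,z_2)$ for some strict partition $\alpha$ (hat = omission). *)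

theory Defs
  imports Main
begin

text \<open>Partitions are represented as weakly decreasing lists of positive naturals.
  Parts are indexed from 1; parts beyond the length are 0.\<close>

definition is_partition :: "nat list \<Rightarrow> bool" where
  "is_partition xs \<longleftrightarrow> sorted_wrt (\<ge>) xs \<and> 0 \<notin> set xs"

definition part :: "nat list \<Rightarrow> nat \<Rightarrow> nat" where
  "part lam i = (if 1 \<le> i \<and> i \<le> length lam then lam ! (i - 1) else 0)"

definition beta_num :: "nat list \<Rightarrow> nat \<Rightarrow> nat \<Rightarrow> nat" where
  "beta_num lam l i = part lam i + l - i"

definition ncount :: "nat \<Rightarrow> nat list \<Rightarrow> nat \<Rightarrow> nat \<Rightarrow> nat" where
  "ncount t lam l i = card {j \<in> {1..l}. beta_num lam l j mod t = i}"

text \<open>Young diagram (English convention, cells (row, column), 1-indexed).\<close>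

definition diagram :: "nat list \<Rightarrow> (nat \<times> nat) set" where
  "diagram lam = {(i, j). 1 \<le> i \<and> 1 \<le> j \<and> j \<le> part lam i}"

definition cell_adj :: "nat \<times> nat \<Rightarrow> nat \<times> nat \<Rightarrow> bool" where
  "cell_adj c d \<longleftrightarrow>
     (fst c = fst d \<and> (snd c = Suc (snd d) \<or> snd d = Suc (snd c))) \<or>
     (snd c = snd d \<and> (fst c = Suc (fst d) \<or> fst d = Suc (fst c)))"

definition cells_connected :: "(nat \<times> nat) set \<Rightarrow> bool" where
  "cells_connected D \<longleftrightarrow>
     (\<forall>c\<in>D. \<forall>d\<in>D. (\<lambda>x y. x \<in> D \<and> y \<in> D \<and> cell_adj x y)\<^sup>*\<^sup>* c d)"

definition no_2x2_square :: "(nat \<times> nat) set \<Rightarrow> bool" where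
  "no_2x2_square D \<longleftrightarrow>
     \<not> (\<exists>i j. (i, j) \<in> D \<and> (Suc i, j) \<in> D \<and> (i, Suc j) \<in> D \<and> (Suc i, Suc j) \<in> D)"

definition remove_rim_hook :: "nat \<Rightarrow> nat list \<Rightarrow> nat list \<Rightarrow> bool" where
  "remove_rim_hook t lam mu \<longleftrightarrow>
     is_partition mu \<and> diagram mu \<subseteq> diagram lam \<and>
     card (diagram lam - diagram mu) = t \<and>
     cells_connected (diagram lam - diagram mu) \<and>
     no_2x2_square (diagram lam - diagram mu)"

text \<open>The t-core: the partition obtained by successively removing rim t-hooks
  until no further rim t-hook can be removed (it is well known to be unique).\<close>

definition tcore :: "nat \<Rightarrow> nat list \<Rightarrow> nat list" where
  "tcore t lam = (THE mu. (remove_rim_hook t)\<^sup>*\<^sup>* lam mu \<and> \<not> (\<exists>nu. remove_rim_hook t mu nu))"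

definition conj_part :: "nat list \<Rightarrow> nat \<Rightarrow> nat" where
  "conj_part lam j = card {i. 1 \<le> i \<and> j \<le> part lam i}"

definition rk :: "nat list \<Rightarrow> nat" where
  "rk mu = Max ({0} \<union> {j. 1 \<le> j \<and> j \<le> part mu j})"

definition frob_arms :: "nat list \<Rightarrow> nat list" where
  "frob_arms mu = map (\<lambda>i. part mu i - i) [1..<rk mu + 1]"

definition frob_legs :: "nat list \<Rightarrow> nat list" where
  "frob_legs mu = map (\<lambda>i. conj_part mu i - i) [1..<rk mu + 1]"

text \<open>(z1,z2,k)-asymmetric: mu = (alpha_1..alpha_r | alpha_1+z1, ..., omit alpha_k+z1, ...,
  alpha_r+z1, z2) for a strictly decreasing sequence alpha (of nonnegative integers).\<close>

definition asymmetric :: "nat \<Rightarrow> nat \<Rightarrow> nat \<Rightarrow> nat list \<Rightarrow> bool" where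
  "asymmetric z1 z2 k mu \<longleftrightarrow>
     1 \<le> k \<and> k \<le> rk mu \<and>
     (\<exists>alpha. sorted_wrt (>) alpha \<and> length alpha = rk mu \<and>
        frob_arms mu = alpha \<and>
        frob_legs mu = (let ys = map (\<lambda>a. a + z1) alpha in take (k - 1) ys @ drop k ys) @ [z2])"

end

theory Submission
  imports Defs
begin

text \<open>Encode a partition with at most \<open>l\<close> parts by its beta-set \<open>{\<lambda>\<^sub>i + l - i}\<close>, drawn on an
  abacus with \<open>t\<close> runners. Removing a rim \<open>t\<close>-hook is the same as sliding one bead up its
  runner into a gap, so the beta-set of the \<open>t\<close>-core is obtained by pushing the \<open>n\<^sub>i\<close> beads of
  every runner \<open>i\<close> to the top. The Frobenius arms of a partition are its beads \<open>\<ge> l\<close> shifted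
  down by \<open>l\<close>, and its legs are the gaps \<open>y < l\<close> reflected to \<open>l - 1 - y\<close>. For \<open>l = tn + 1\<close>,
  \<open>(1,0,k)\<close>-asymmetry of the core therefore says that the gaps below \<open>tn\<close>, reflected at \<open>tn\<close>,
  are \<open>0\<close> together with all beads above \<open>tn\<close> except one. Read runner by runner, this forces
  \<open>n\<^sub>0 = n\<close>, and the counts of the runners \<open>i\<close> and \<open>t - i\<close> add up to \<open>2n\<close>, except for the pair
  carrying the exceptional bead, where the sum is one larger (two larger if \<open>i = t - i\<close>).\<close>

lemma sorted_wrt_greater_unique:
  fixes xs ys :: "'a::linorder list"
  assumes "sorted_wrt (>) xs" "sorted_wrt (>) ys" "set xs = set ys"
  shows "xs = ys"
proof -
  have "sorted_wrt (<) (rev xs)" "sorted_wrt (<) (rev ys)"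
    using assms(1,2) by (simp_all add: sorted_wrt_rev)
  then have "rev xs = rev ys"
    using sorted_distinct_set_unique[of "rev xs" "rev ys"] assms(3) by (simp add: strict_sorted_iff)
  then show ?thesis by simp
qed

lemma sorted_wrt_greater_distinct: "sorted_wrt (>) (xs :: 'a::linorder list) \<Longrightarrow> distinct xs"
  by (metis distinct_rev sorted_wrt_rev strict_sorted_iff)

lemma downward_closed_eq_lessThan:
  fixes Q :: "nat set"
  assumes "finite Q" "\<And>q q'. q \<in> Q \<Longrightarrow> q' \<le> q \<Longrightarrow> q' \<in> Q"
  shows "Q = {..<card Q}"
proof (cases "Q = {}")
  case False
  have "Q = {..Max Q}"
  proof
    show "Q \<subseteq> {..Max Q}" using Max_ge[OF assms(1)] by auto
    show "{..Max Q} \<subseteq> Q" using assms(2) Max_in[OF assms(1) False] by auto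
  qed
  then show ?thesis by (metis card_atMost lessThan_Suc_atMost)
qed simp

lemma set_take_drop_Suc:
  assumes "distinct ys" "i < length ys"
  shows "set (take i ys @ drop (Suc i) ys) = set ys - {ys ! i}"
proof -
  have ys: "ys = take i ys @ ys ! i # drop (Suc i) ys" using id_take_nth_drop assms(2) by blast
  then have "distinct (take i ys @ ys ! i # drop (Suc i) ys)" using assms(1) by simp
  then have "ys ! i \<notin> set (take i ys) \<union> set (drop (Suc i) ys)" by auto
  moreover have "set ys = set (take i ys) \<union> {ys ! i} \<union> set (drop (Suc i) ys)" by (subst ys) auto
  ultimately show ?thesis by auto
qed

lemma sorted_wrt_take_drop_Suc:
  assumes "sorted_wrt R ys" "i < length ys"
  shows "sorted_wrt R (take i ys @ drop (Suc i) ys)"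
proof -
  have "sorted_wrt R (take i ys @ ys ! i # drop (Suc i) ys)" using assms id_take_nth_drop by metis
  then show ?thesis by (auto simp: sorted_wrt_append)
qed

lemma lessThan_eq_Diff_singleton_iff:
  fixes a b e :: nat
  assumes "e < b"
  shows "{..<a} = {..<b} - {e} \<longleftrightarrow> Suc a = b \<and> e = a"
proof
  assume eq: "{..<a} = {..<b} - {e}"
  have "card {..<a} = card ({..<b} - {e})" using eq by simp
  then have "a = b - 1" using assms by (simp add: card_Diff_singleton)
  moreover have "a \<notin> {..<b} - {e}" using eq by auto
  ultimately show "Suc a = b \<and> e = a" using assms by auto
qed auto

section \<open>Partitions and beta-sets\<close>

lemma part_antimono:
  assumes "is_partition lam" "1 \<le> i" "i \<le> j"
  shows "part lam j \<le> part lam i"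
proof (cases "i < j \<and> j \<le> length lam")
  case True
  have "sorted_wrt (\<ge>) lam" using assms(1) unfolding is_partition_def by simp
  then have "lam ! (j - 1) \<le> lam ! (i - 1)"
    using True assms(2) by (auto simp: sorted_wrt_iff_nth_less)
  then show ?thesis using True assms(2) unfolding part_def by auto
next
  case False
  then show ?thesis using assms(3) unfolding part_def by auto
qed

lemma part_eq_0: "length lam < j \<Longrightarrow> part lam j = 0"
  unfolding part_def by auto

lemma part_pos:
  assumes "is_partition lam" "1 \<le> i" "i \<le> length lam"
  shows "1 \<le> part lam i"
proof -
  have "lam ! (i - 1) \<in> set lam" using assms(2,3) by simp
  then have "lam ! (i - 1) \<noteq> 0" using assms(1) unfolding is_partition_def by metis
  then show ?thesis using assms(2,3) unfolding part_def by simp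
qed

lemma length_le_of_part_le:
  assumes "is_partition mu" "\<And>i. 1 \<le> i \<Longrightarrow> part mu i \<le> part lam i"
  shows "length mu \<le> length lam"
proof (rule ccontr)
  assume "\<not> length mu \<le> length lam"
  then show False
    using part_pos[OF assms(1), of "length mu"] part_eq_0[of lam "length mu"] assms(2)[of "length mu"]
    by simp
qed

lemma partition_eqI:
  assumes "is_partition lam" "is_partition mu" "\<And>i. 1 \<le> i \<Longrightarrow> part lam i = part mu i"
  shows "lam = mu"
proof (rule nth_equalityI)
  show len: "length lam = length mu"
    using length_le_of_part_le[OF assms(1)] length_le_of_part_le[OF assms(2)] assms(3)
    by (metis order.refl le_antisym)
  fix i assume "i < length lam"
  then show "lam ! i = mu ! i" using assms(3)[of "Suc i"] len unfolding part_def by simp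
qed

lemma diagram_subset_iff:
  "diagram mu \<subseteq> diagram lam \<longleftrightarrow> (\<forall>i\<ge>1. part mu i \<le> part lam i)"
proof
  assume sub: "diagram mu \<subseteq> diagram lam"
  show "\<forall>i\<ge>1. part mu i \<le> part lam i"
  proof (intro allI impI)
    fix i :: nat assume "1 \<le> i"
    then have "part mu i = 0 \<or> (i, part mu i) \<in> diagram mu"
      unfolding diagram_def by auto
    then show "part mu i \<le> part lam i" using sub unfolding diagram_def by auto
  qed
qed (auto simp: diagram_def)

lemma partition_of_antimono:
  fixes f :: "nat \<Rightarrow> nat"
  assumes antimono: "\<And>i. 1 \<le> i \<Longrightarrow> f (Suc i) \<le> f i" and vanish: "f (Suc N) = 0"
  obtains mu where "is_partition mu" "\<And>i. 1 \<le> i \<Longrightarrow> part mu i = f i" "length mu \<le> N"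
proof -
  have le: "f j \<le> f i" if "1 \<le> i" "i \<le> j" for i j
    using that by (induction j) (auto intro: le_trans[OF antimono] simp: le_Suc_eq)
  define K where "K = (LEAST k. f (Suc k) = 0)"
  have fK: "f (Suc K) = 0" and KN: "K \<le> N"
    unfolding K_def using vanish by (auto intro: LeastI Least_le)
  have pos: "f i \<noteq> 0" if "1 \<le> i" "i \<le> K" for i
  proof
    assume "f i = 0"
    then have "K \<le> i - 1" unfolding K_def using that(1) by (intro Least_le) simp
    then show False using that by simp
  qed
  define mu where "mu = map f [1..<K+1]"
  have "is_partition mu"
    unfolding is_partition_def mu_def
    using le pos by (fastforce simp: sorted_wrt_iff_nth_less simp del: upt_Suc)
  moreover have "part mu i = f i" if "1 \<le> i" for i
    using le[of "Suc K" i] fK that unfolding mu_def part_def by (auto simp del: upt_Suc)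
  moreover have "length mu \<le> N" unfolding mu_def using KN by simp
  ultimately show ?thesis by (rule that)
qed

definition beta_set :: "nat list \<Rightarrow> nat \<Rightarrow> nat set" where
  "beta_set lam l = beta_num lam l ` {1..l}"

lemma beta_num_strict_antimono:
  assumes "is_partition lam" "1 \<le> i" "i < j" "j \<le> l"
  shows "beta_num lam l j < beta_num lam l i"
  using part_antimono[OF assms(1,2), of j] assms(3,4) unfolding beta_num_def by simp

lemma inj_on_beta_num: "is_partition lam \<Longrightarrow> inj_on (beta_num lam l) {1..l}"
  by (rule inj_onI) (metis atLeastAtMost_iff beta_num_strict_antimono less_irrefl nat_neq_iff)

lemma finite_beta_set [simp]: "finite (beta_set lam l)"
  unfolding beta_set_def by simp

lemma card_beta_set: "is_partition lam \<Longrightarrow> card (beta_set lam l) = l"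
  unfolding beta_set_def using inj_on_beta_num card_image by fastforce

lemma beta_set_inject:
  assumes "is_partition lam" "is_partition mu" "length lam \<le> l" "length mu \<le> l"
    and "beta_set lam l = beta_set mu l"
  shows "lam = mu"
proof (rule partition_eqI[OF assms(1,2)])
  let ?betas = "\<lambda>lam. map (beta_num lam l) [1..<l+1]"
  have "sorted_wrt (>) (?betas lam)" if "is_partition lam" for lam
    using beta_num_strict_antimono[OF that]
    by (auto simp: sorted_wrt_iff_nth_less simp del: upt_Suc)
  moreover have "set (?betas lam) = beta_set lam l" for lam
    unfolding beta_set_def by auto
  ultimately have eq: "?betas lam = ?betas mu"
    using sorted_wrt_greater_unique assms(1,2,5) by metis
  fix i :: nat assume i: "1 \<le> i"
  show "part lam i = part mu i"
  proof (cases "i \<le> l")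
    case True
    then have "beta_num lam l i = beta_num mu l i"
      using arg_cong[OF eq, of "\<lambda>xs. xs ! (i - 1)"] i by (simp del: upt_Suc)
    then show ?thesis unfolding beta_num_def using True by simp
  qed (use part_eq_0 assms(3,4) in auto)
qed

section \<open>Rim hooks as bead moves\<close>

definition skew :: "(nat \<Rightarrow> nat) \<Rightarrow> (nat \<Rightarrow> nat) \<Rightarrow> (nat \<times> nat) set" where
  "skew L M = {(i, j). 1 \<le> i \<and> M i < j \<and> j \<le> L i}"

lemma diagram_diff_eq_skew: "diagram lam - diagram mu = skew (part lam) (part mu)"
  unfolding diagram_def skew_def by auto

abbreviation adj_in :: "(nat \<times> nat) set \<Rightarrow> nat \<times> nat \<Rightarrow> nat \<times> nat \<Rightarrow> bool" where
  "adj_in D \<equiv> \<lambda>x y. x \<in> D \<and> y \<in> D \<and> cell_adj x y"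

text \<open>The skew shape of part functions \<open>L\<close> over \<open>M\<close> is a border strip occupying rows \<open>r\<close> to \<open>s\<close>:
  consecutive rows overlap in exactly one column.\<close>

definition border_strip :: "(nat \<Rightarrow> nat) \<Rightarrow> (nat \<Rightarrow> nat) \<Rightarrow> nat \<Rightarrow> nat \<Rightarrow> bool" where
  "border_strip L M r s \<longleftrightarrow> 1 \<le> r \<and> r \<le> s \<and> (\<forall>i. 1 \<le> i \<and> (i < r \<or> s < i) \<longrightarrow> M i = L i) \<and>
     (\<forall>i. r \<le> i \<and> i < s \<longrightarrow> M i + 1 = L (Suc i)) \<and> M s < L s"

lemma border_strip_less:
  assumes "border_strip L M r s" "\<And>i. 1 \<le> i \<Longrightarrow> L (Suc i) \<le> L i" "r \<le> i" "i \<le> s"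
  shows "M i < L i"
proof (cases "i = s")
  case False
  then have "M i + 1 = L (Suc i)" using assms unfolding border_strip_def by auto
  moreover have "L (Suc i) \<le> L i" using assms(2)[of i] assms(1,3) unfolding border_strip_def by auto
  ultimately show ?thesis by auto
qed (use assms in \<open>auto simp: border_strip_def\<close>)

lemma border_strip_le:
  assumes "border_strip L M r s" "\<And>i. 1 \<le> i \<Longrightarrow> L (Suc i) \<le> L i" "1 \<le> i"
  shows "M i \<le> L i"
  using border_strip_less[OF assms(1,2), of i] assms(1,3) unfolding border_strip_def
  by (cases "r \<le> i \<and> i \<le> s") auto

lemma skew_border_strip:
  assumes "border_strip L M r s" "\<And>i. 1 \<le> i \<Longrightarrow> L (Suc i) \<le> L i"
  shows "skew L M = Sigma {r..s} (\<lambda>i. {M i<..L i})"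
  using assms(1) unfolding border_strip_def skew_def by fastforce

lemma card_skew_border_strip:
  assumes strip: "border_strip L M r s" and anti: "\<And>i. 1 \<le> i \<Longrightarrow> L (Suc i) \<le> L i"
  shows "card (skew L M) + M s = L r + (s - r)"
proof -
  have less: "M i < L i" if "r \<le> i" "i \<le> s" for i using border_strip_less[OF strip anti that] .
  have rs: "r \<le> s" using strip unfolding border_strip_def by simp
  have "(\<Sum>i\<in>{r..s'}. L i - M i) + M s' = L r + (s' - r)" if "r \<le> s'" "s' \<le> s" for s'
    using that
  proof (induction s')
    case (Suc s')
    show ?case
    proof (cases "r = Suc s'")
      case False
      then have r: "r \<le> s'" using Suc.prems by simp
      have "M s' + 1 = L (Suc s')" using strip Suc.prems r unfolding border_strip_def by simp
      moreover have "M (Suc s') < L (Suc s')" using less Suc.prems by simp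
      moreover have "(\<Sum>i\<in>{r..Suc s'}. L i - M i) = (\<Sum>i\<in>{r..s'}. L i - M i) + (L (Suc s') - M (Suc s'))"
        using r by (simp add: sum.cl_ivl_Suc)
      ultimately show ?thesis using Suc.IH Suc.prems r by simp
    qed (use less[of r] Suc.prems in simp)
  qed (use less[of 0] in simp)
  moreover have "card (skew L M) = (\<Sum>i\<in>{r..s}. L i - M i)"
    using skew_border_strip[OF strip anti] by (simp add: card_SigmaI)
  ultimately show ?thesis using rs by simp
qed

lemma beta_set_border_strip:
  assumes lam: "is_partition lam" and mu: "is_partition mu" and sl: "s \<le> l"
    and strip: "border_strip (part lam) (part mu) r s"
  shows "beta_num mu l s + (part lam r + (s - r) - part mu s) = beta_num lam l r"
    and "beta_set mu l = insert (beta_num mu l s) (beta_set lam l - {beta_num lam l r})"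
proof -
  let ?L = "part lam" and ?M = "part mu"
  have r1: "1 \<le> r" and rs: "r \<le> s" using strip unfolding border_strip_def by auto
  have anti: "\<And>i. 1 \<le> i \<Longrightarrow> ?L (Suc i) \<le> ?L i" using part_antimono[OF lam] by simp
  have out: "?M i = ?L i" if "1 \<le> i" "i < r \<or> s < i" for i
    using strip that unfolding border_strip_def by auto
  have "?M s < ?L s" using border_strip_less[OF strip anti rs] by simp
  then show "beta_num mu l s + (?L r + (s - r) - ?M s) = beta_num lam l r"
    unfolding beta_num_def using part_antimono[OF lam r1 rs] sl rs by auto
  have shift: "beta_num mu l i = beta_num lam l (Suc i)" if "r \<le> i" "i < s" for i
    using strip that sl unfolding border_strip_def beta_num_def by auto
  have "{1..l} = {1..<r} \<union> {r..<s} \<union> {s} \<union> {s<..l}" using r1 rs sl by auto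
  then have "beta_set mu l = beta_num mu l ` ({1..<r} \<union> {r..<s} \<union> {s<..l}) \<union> {beta_num mu l s}"
    unfolding beta_set_def by auto
  also have "beta_num mu l ` ({1..<r} \<union> {r..<s} \<union> {s<..l}) = beta_num lam l ` ({1..<r} \<union> Suc ` {r..<s} \<union> {s<..l})"
    unfolding image_Un image_image
    using out shift by (intro arg_cong2[where f = "(\<union>)"] image_cong) (auto simp: beta_num_def)
  also have "{1..<r} \<union> Suc ` {r..<s} \<union> {s<..l} = {1..l} - {r}"
    using r1 rs sl by (auto simp: image_Suc_atLeastLessThan)
  also have "beta_num lam l ` ({1..l} - {r}) = beta_set lam l - {beta_num lam l r}"
    unfolding beta_set_def using inj_on_image_set_diff[OF inj_on_beta_num[OF lam, of l], of "{1..l}" "{r}"] r1 rs sl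
    by auto
  finally show "beta_set mu l = insert (beta_num mu l s) (beta_set lam l - {beta_num lam l r})" by simp
qed

lemma row_segment_connected:
  assumes "\<And>k. j' \<le> k \<Longrightarrow> k \<le> j \<Longrightarrow> (i, k) \<in> D" "j' \<le> j"
  shows "(adj_in D)\<^sup>*\<^sup>* (i, j) (i, j')"
  using assms
proof (induction j)
  case (Suc j)
  show ?case
  proof (cases "j' = Suc j")
    case False
    then have "adj_in D (i, Suc j) (i, j)" using Suc.prems by (auto simp: cell_adj_def)
    moreover have "(adj_in D)\<^sup>*\<^sup>* (i, j) (i, j')" using Suc False by simp
    ultimately show ?thesis by (rule converse_rtranclp_into_rtranclp)
  qed simp
qed simp

lemma border_strip_connected:
  assumes strip: "border_strip L M r s" and anti: "\<And>i. 1 \<le> i \<Longrightarrow> L (Suc i) \<le> L i"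
  shows "cells_connected (skew L M)"
proof -
  let ?D = "skew L M"
  have inD: "(i, k) \<in> ?D \<longleftrightarrow> r \<le> i \<and> i \<le> s \<and> M i < k \<and> k \<le> L i" for i k
    using skew_border_strip[OF assms] by auto
  have to_last: "(adj_in ?D)\<^sup>*\<^sup>* (i, j) (s, M s + 1)" if "(i, j) \<in> ?D" for i j
    using that
  proof (induction "s - i" arbitrary: i j)
    case 0
    then have "i = s" "M s < j" by (auto simp: inD)
    moreover have "(adj_in ?D)\<^sup>*\<^sup>* (s, j) (s, M s + 1)"
      using 0 \<open>i = s\<close> by (intro row_segment_connected) (simp_all add: inD)
    ultimately show ?case by simp
  next
    case (Suc d)
    have i: "r \<le> i" "i < s" using Suc.hyps(2) Suc.prems by (auto simp: inD)
    have "M i + 1 = L (Suc i)" using strip i unfolding border_strip_def by simp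
    moreover have "M (Suc i) < L (Suc i)" using border_strip_less[OF strip anti] i by simp
    ultimately have down: "(Suc i, M i + 1) \<in> ?D" using i by (simp add: inD)
    have "(adj_in ?D)\<^sup>*\<^sup>* (i, j) (i, M i + 1)"
      using Suc.prems by (intro row_segment_connected) (simp_all add: inD)
    moreover have "adj_in ?D (i, M i + 1) (Suc i, M i + 1)"
      using Suc.prems down by (simp add: inD cell_adj_def)
    ultimately have "(adj_in ?D)\<^sup>*\<^sup>* (i, j) (Suc i, M i + 1)"
      by (rule rtranclp.rtrancl_into_rtrancl)
    moreover have "(adj_in ?D)\<^sup>*\<^sup>* (Suc i, M i + 1) (s, M s + 1)"
      using Suc.hyps(1)[of "Suc i"] Suc.hyps(2) down by simp
    ultimately show ?case by (rule rtranclp_trans)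
  qed
  have "symp (adj_in ?D)" unfolding symp_def cell_adj_def by auto
  then have from_last: "(adj_in ?D)\<^sup>*\<^sup>* (s, M s + 1) d" if "d \<in> ?D" for d
    using to_last[of "fst d" "snd d"] that by (auto intro: sympD[OF symp_rtranclp])
  show ?thesis
    unfolding cells_connected_def
  proof (intro ballI)
    fix c d assume "c \<in> ?D" "d \<in> ?D"
    then show "(adj_in ?D)\<^sup>*\<^sup>* c d"
      using to_last[of "fst c" "snd c"] from_last[of d] by (simp add: rtranclp_trans)
  qed
qed

lemma border_strip_no_2x2_square:
  assumes "border_strip L M r s" "\<And>i. 1 \<le> i \<Longrightarrow> L (Suc i) \<le> L i"
  shows "no_2x2_square (skew L M)"
proof -
  have "False" if "(i, j) \<in> skew L M" "(Suc i, Suc j) \<in> skew L M" for i j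
  proof -
    have "r \<le> i" "i < s" using that skew_border_strip[OF assms] by auto
    then have "L (Suc i) = M i + 1" using assms(1) unfolding border_strip_def by simp
    then show False using that unfolding skew_def by simp
  qed
  then show ?thesis unfolding no_2x2_square_def by blast
qed

lemma remove_rim_hook_border_stripI:
  assumes lam: "is_partition lam" and mu: "is_partition mu"
    and strip: "border_strip (part lam) (part mu) r s"
  shows "remove_rim_hook (part lam r + (s - r) - part mu s) lam mu"
proof -
  have anti: "\<And>i. 1 \<le> i \<Longrightarrow> part lam (Suc i) \<le> part lam i" using part_antimono[OF lam] by simp
  show ?thesis
    unfolding remove_rim_hook_def diagram_diff_eq_skew diagram_subset_iff
    using mu border_strip_le[OF strip anti] card_skew_border_strip[OF strip anti]
      border_strip_connected[OF strip anti] border_strip_no_2x2_square[OF strip anti]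
    by auto
qed

lemma no_2x2_square_skew_le:
  assumes "no_2x2_square (skew L M)" "1 \<le> i" "L (Suc i) \<le> L i" "M (Suc i) \<le> M i"
  shows "L (Suc i) \<le> M i + 1"
proof (rule ccontr)
  assume "\<not> L (Suc i) \<le> M i + 1"
  then have "(i, M i + 1) \<in> skew L M" "(Suc i, M i + 1) \<in> skew L M"
    "(i, M i + 2) \<in> skew L M" "(Suc i, M i + 2) \<in> skew L M"
    using assms(2-4) unfolding skew_def by auto
  then show False using assms(1) unfolding no_2x2_square_def by fastforce
qed

text \<open>A path of adjacent cells cannot cross from row \<open>i\<close> to row \<open>i + 1\<close> where these rows
  of the skew shape share no column.\<close>

lemma connected_skew_rows_overlap:
  assumes conn: "cells_connected (skew L M)" and rows: "M r < L r" "M s < L s" "1 \<le> r"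
    and i: "r \<le> i" "i < s"
  shows "M i < L (Suc i)"
proof (rule ccontr)
  assume gap: "\<not> M i < L (Suc i)"
  have "(adj_in (skew L M))\<^sup>*\<^sup>* (r, L r) (s, L s)"
    using conn rows i unfolding cells_connected_def skew_def by auto
  then have "fst (s, L s) \<le> i"
  proof (induction rule: rtranclp_induct)
    case (step y z)
    obtain a b a' b' where yz: "y = (a, b)" "z = (a', b')" by fastforce
    show ?case
    proof (rule ccontr)
      assume "\<not> fst z \<le> i"
      then have "a' = Suc i" "a = i" "b' = b" using step yz unfolding cell_adj_def by auto
      then show False using step(2) gap yz unfolding skew_def by auto
    qed
  qed (use i in simp)
  then show False using i by simp
qed

lemma remove_rim_hook_border_strip:
  assumes lam: "is_partition lam" and t: "1 \<le> t" and rh: "remove_rim_hook t lam mu"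
  obtains r s where "border_strip (part lam) (part mu) r s" "t = part lam r + (s - r) - part mu s"
proof -
  let ?L = "part lam" and ?M = "part mu"
  have mu: "is_partition mu" and le: "\<And>i. 1 \<le> i \<Longrightarrow> ?M i \<le> ?L i"
    and card: "card (skew ?L ?M) = t" and conn: "cells_connected (skew ?L ?M)"
    and no2: "no_2x2_square (skew ?L ?M)"
    using rh unfolding remove_rim_hook_def diagram_diff_eq_skew diagram_subset_iff by auto
  have antiL: "\<And>i. 1 \<le> i \<Longrightarrow> ?L (Suc i) \<le> ?L i" using part_antimono[OF lam] by simp
  have antiM: "\<And>i. 1 \<le> i \<Longrightarrow> ?M (Suc i) \<le> ?M i" using part_antimono[OF mu] by simp
  define R where "R = {i. 1 \<le> i \<and> ?M i < ?L i}"
  have "R \<subseteq> {1..length lam}"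
  proof
    fix i assume "i \<in> R"
    then show "i \<in> {1..length lam}"
      using part_eq_0[of lam i] unfolding R_def by (cases "i \<le> length lam") auto
  qed
  then have finR: "finite R" by (rule finite_subset) simp
  have "skew ?L ?M \<noteq> {}" using card t by auto
  then have "R \<noteq> {}" unfolding skew_def R_def by auto
  define r where "r = Min R"
  define s where "s = Max R"
  have "r \<in> R" "s \<in> R" "r \<le> s" unfolding r_def s_def using finR \<open>R \<noteq> {}\<close> by auto
  have outside: "?M i = ?L i" if "1 \<le> i" "i < r \<or> s < i" for i
  proof -
    have "i \<notin> R"
    proof
      assume "i \<in> R"
      then have "r \<le> i" "i \<le> s" unfolding r_def s_def using finR by auto
      then show False using that by auto
    qed
    then show ?thesis using that(1) le[of i] unfolding R_def by simp
  qed
  have strip: "border_strip ?L ?M r s"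
    unfolding border_strip_def
  proof (intro conjI allI impI)
    fix i assume "r \<le> i \<and> i < s"
    then show "?M i + 1 = ?L (Suc i)"
      using connected_skew_rows_overlap[OF conn, of r s i] no_2x2_square_skew_le[OF no2, of i]
        antiL antiM \<open>r \<in> R\<close> \<open>s \<in> R\<close> unfolding R_def by fastforce
  qed (use \<open>r \<in> R\<close> \<open>s \<in> R\<close> \<open>r \<le> s\<close> outside in \<open>auto simp: R_def\<close>)
  have "t = ?L r + (s - r) - ?M s" using card_skew_border_strip[OF strip antiL] card by simp
  with strip show ?thesis by (rule that)
qed

lemma remove_rim_hook_beta_set:
  assumes lam: "is_partition lam" and len: "length lam \<le> l" and t: "1 \<le> t"
    and rh: "remove_rim_hook t lam mu"
  shows "is_partition mu" "length mu \<le> length lam"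
    "\<exists>x\<in>beta_set lam l. t \<le> x \<and> x - t \<notin> beta_set lam l \<and>
       beta_set mu l = insert (x - t) (beta_set lam l - {x})"
proof -
  show mu: "is_partition mu" using rh unfolding remove_rim_hook_def by simp
  have anti: "\<And>i. 1 \<le> i \<Longrightarrow> part lam (Suc i) \<le> part lam i" using part_antimono[OF lam] by simp
  obtain r s where strip: "border_strip (part lam) (part mu) r s"
    and size: "t = part lam r + (s - r) - part mu s"
    using remove_rim_hook_border_strip[OF lam t rh] .
  show "length mu \<le> length lam"
    using length_le_of_part_le[OF mu] border_strip_le[OF strip anti] by blast
  have r: "1 \<le> r" "r \<le> s" and "part mu s < part lam s"
    using strip unfolding border_strip_def by auto
  then have "s \<le> l" using part_eq_0[of lam s] len by (cases "s \<le> length lam") auto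
  note moved = beta_set_border_strip[OF lam mu this strip]
  let ?x = "beta_num lam l r"
  have x: "?x \<in> beta_set lam l" unfolding beta_set_def using r \<open>s \<le> l\<close> by auto
  have tx: "t \<le> ?x" and "beta_num mu l s = ?x - t" using moved(1) size by auto
  then have new: "beta_set mu l = insert (?x - t) (beta_set lam l - {?x})" using moved(2) by simp
  have "?x - t \<notin> beta_set lam l"
  proof
    assume "?x - t \<in> beta_set lam l"
    moreover have "?x - t \<noteq> ?x" using t tx by simp
    ultimately have "beta_set mu l = beta_set lam l - {?x}" using new by auto
    then have "card (beta_set mu l) = card (beta_set lam l) - 1" using x by simp
    then show False using card_beta_set[OF mu, of l] card_beta_set[OF lam, of l] r \<open>s \<le> l\<close> by simp
  qed
  then show "\<exists>x\<in>beta_set lam l. t \<le> x \<and> x - t \<notin> beta_set lam l \<and>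
      beta_set mu l = insert (x - t) (beta_set lam l - {x})"
    using x tx new by blast
qed

lemma border_strip_exists:
  assumes lam: "is_partition lam" and r: "1 \<le> r" "r \<le> s"
    and m: "part lam (Suc s) \<le> m" "m < part lam s"
  obtains mu where "is_partition mu" "length mu \<le> length lam"
    "border_strip (part lam) (part mu) r s" "part mu s = m"
proof -
  let ?L = "part lam"
  define M where "M i = (if i < r \<or> s < i then ?L i else if i < s then ?L (Suc i) - 1 else m)" for i
  have antiL: "\<And>i. 1 \<le> i \<Longrightarrow> ?L (Suc i) \<le> ?L i" using part_antimono[OF lam] by simp
  have "s \<le> length lam" using part_eq_0[of lam s] m by (cases "s \<le> length lam") auto
  then have vanish: "M (Suc (length lam)) = 0" unfolding M_def using part_eq_0[of lam] by simp
  have Mr: "M r \<le> ?L r" using m antiL[of r] r by (auto simp: M_def)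
  have antiM: "M (Suc i) \<le> M i" if "1 \<le> i" for i
  proof -
    consider "Suc i < r" | "Suc i = r" | "r \<le> i" "Suc i < s" | "r \<le> i" "Suc i = s" | "s \<le> i"
      by linarith
    then show ?thesis
    proof cases
      case 2
      then show ?thesis using Mr antiL[OF that] by (auto simp: M_def)
    next
      case 5
      then show ?thesis using m antiL[OF that] by (auto simp: M_def)
    qed (use m antiL[OF that] antiL[of "Suc i"] in \<open>auto simp: M_def\<close>)
  qed
  obtain mu where mu: "is_partition mu" "\<And>i. 1 \<le> i \<Longrightarrow> part mu i = M i" "length mu \<le> length lam"
    using partition_of_antimono[OF antiM vanish] by blast
  have "border_strip ?L (part mu) r s"
    unfolding border_strip_def
  proof (intro conjI allI impI)
    fix i assume i: "r \<le> i \<and> i < s"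
    then have "1 \<le> ?L (Suc i)" using part_antimono[OF lam, of "Suc i" s] m by simp
    then show "part mu i + 1 = ?L (Suc i)" using mu(2)[of i] i r by (simp add: M_def)
  qed (use r m mu(2) in \<open>auto simp: M_def\<close>)
  moreover have "part mu s = m" using mu(2) r by (simp add: M_def)
  ultimately show ?thesis using mu(1,3) that by blast
qed

text \<open>Row \<open>s\<close> is the last row whose bead lies above the gap \<open>y\<close>; the border strip from the
  bead of row \<open>r\<close> to \<open>y\<close> ends there.\<close>

lemma beta_set_gap_row:
  assumes lam: "is_partition lam" and len: "length lam \<le> l" and r: "1 \<le> r" "r \<le> l"
    and y: "y < beta_num lam l r" "y \<notin> beta_set lam l"
  obtains s where "r \<le> s" "s \<le> l" "y + s < part lam s + l" "part lam (Suc s) + l \<le> y + s"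
proof -
  define S where "S = {i \<in> {r..l}. y < beta_num lam l i}"
  have "r \<in> S" "finite S" unfolding S_def using r y by auto
  define s where "s = Max S"
  have s: "s \<in> S" "r \<le> s"
    unfolding s_def using Max_in[OF \<open>finite S\<close>] Max_ge[OF \<open>finite S\<close> \<open>r \<in> S\<close>] \<open>r \<in> S\<close> by auto
  then have "s \<le> l" "y + s < part lam s + l" unfolding S_def beta_num_def by auto
  moreover have "part lam (Suc s) + l \<le> y + s"
  proof (cases "s < l")
    case True
    then have "Suc s \<notin> S" using \<open>finite S\<close> unfolding s_def by (metis Max_ge Suc_n_not_le_n)
    moreover have "beta_num lam l (Suc s) \<in> beta_set lam l" using True unfolding beta_set_def by simp
    then have "beta_num lam l (Suc s) \<noteq> y" using y(2) by auto
    ultimately show ?thesis using True s unfolding S_def beta_num_def by auto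
  qed (use part_eq_0[of lam "Suc s"] len \<open>s \<le> l\<close> in simp)
  ultimately show ?thesis using s(2) that by blast
qed

lemma bead_move_remove_rim_hook:
  assumes lam: "is_partition lam" and len: "length lam \<le> l" and t: "1 \<le> t"
    and x: "x \<in> beta_set lam l" "t \<le> x" "x - t \<notin> beta_set lam l"
  obtains mu where "remove_rim_hook t lam mu" "length mu \<le> length lam"
    "beta_set mu l = insert (x - t) (beta_set lam l - {x})"
proof -
  obtain r where r: "1 \<le> r" "r \<le> l" and xr: "x = beta_num lam l r"
    using x(1) unfolding beta_set_def by auto
  obtain s where s: "r \<le> s" "s \<le> l" "x - t + s < part lam s + l" "part lam (Suc s) + l \<le> x - t + s"
    using beta_set_gap_row[OF lam len r, of "x - t"] x t xr by auto
  have "part lam (Suc s) \<le> x - t + s - l" "x - t + s - l < part lam s" using s by auto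
  then obtain mu where mu: "is_partition mu" "length mu \<le> length lam"
    and strip: "border_strip (part lam) (part mu) r s" and ms: "part mu s = x - t + s - l"
    using border_strip_exists[OF lam r(1) s(1)] by blast
  note moved = beta_set_border_strip[OF lam mu(1) s(2) strip]
  have "beta_num mu l s = x - t" using ms s unfolding beta_num_def by simp
  then have "part lam r + (s - r) - part mu s = t" using moved(1) xr x(2) by simp
  then have "remove_rim_hook t lam mu" using remove_rim_hook_border_stripI[OF lam mu(1) strip] by simp
  moreover have "beta_set mu l = insert (x - t) (beta_set lam l - {x})"
    using moved(2) \<open>beta_num mu l s = x - t\<close> xr by simp
  ultimately show ?thesis using mu(2) that by blast
qed

section \<open>The abacus and the \<open>t\<close>-core\<close>

definition runner_count :: "nat \<Rightarrow> nat set \<Rightarrow> nat \<Rightarrow> nat" where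
  "runner_count t X i = card {x \<in> X. x mod t = i}"

text \<open>The bead positions of a \<open>t\<close>-runner abacus carrying \<open>c i\<close> beads on runner \<open>i\<close>, all pushed
  to the top: position \<open>x\<close> is row \<open>x div t\<close> of runner \<open>x mod t\<close>.\<close>

definition abacus :: "nat \<Rightarrow> (nat \<Rightarrow> nat) \<Rightarrow> nat set" where
  "abacus t c = {x. x div t < c (x mod t)}"

lemma ncount_eq_runner_count:
  assumes "is_partition lam"
  shows "ncount t lam l i = runner_count t (beta_set lam l) i"
proof -
  have "{x \<in> beta_set lam l. x mod t = i} = beta_num lam l ` {j \<in> {1..l}. beta_num lam l j mod t = i}"
    unfolding beta_set_def by auto
  moreover have "inj_on (beta_num lam l) {j \<in> {1..l}. beta_num lam l j mod t = i}"
    using inj_on_beta_num[OF assms, of l] by (rule inj_on_subset) auto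
  ultimately show ?thesis unfolding ncount_def runner_count_def by (simp add: card_image)
qed

lemma runner_count_bead_move:
  assumes "finite X" "x \<in> X" "t \<le> x" "x - t \<notin> X"
  shows "runner_count t (insert (x - t) (X - {x})) = runner_count t X"
proof
  fix i
  have same_runner: "(x - t) mod t = x mod t" using assms(3) by (simp add: le_mod_geq)
  show "runner_count t (insert (x - t) (X - {x})) i = runner_count t X i"
  proof (cases "x mod t = i")
    case True
    then have "{z \<in> insert (x - t) (X - {x}). z mod t = i} = insert (x - t) ({z \<in> X. z mod t = i} - {x})"
      using same_runner by auto
    moreover have "Suc (card ({z \<in> X. z mod t = i} - {x})) = card {z \<in> X. z mod t = i}"
      using assms(1,2) True by (intro card_Suc_Diff1) auto
    ultimately show ?thesis unfolding runner_count_def using assms(1,4) by simp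
  next
    case False
    then have "{z \<in> insert (x - t) (X - {x}). z mod t = i} = {z \<in> X. z mod t = i}"
      using same_runner by auto
    then show ?thesis unfolding runner_count_def by simp
  qed
qed

lemma sum_bead_move_less:
  fixes X :: "nat set"
  assumes "finite X" "x \<in> X" "t \<le> x" "x - t \<notin> X" "1 \<le> t"
  shows "\<Sum>(insert (x - t) (X - {x})) < \<Sum>X"
  using assms sum.remove[OF assms(1,2), of id] by simp

lemma abacus_runner_count:
  assumes fin: "finite X" and t: "1 \<le> t" and closed: "\<And>x. x \<in> X \<Longrightarrow> t \<le> x \<Longrightarrow> x - t \<in> X"
  shows "abacus t (runner_count t X) = X"
proof (intro set_eqI)
  fix x
  define \<rho> where "\<rho> = x mod t"
  define Q where "Q = (\<lambda>q. \<rho> + t * q) -` X"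
  have inj: "inj (\<lambda>q. \<rho> + t * q)" using t by (auto simp: inj_def)
  have "{z \<in> X. z mod t = \<rho>} = (\<lambda>q. \<rho> + t * q) ` Q"
  proof
    show "(\<lambda>q. \<rho> + t * q) ` Q \<subseteq> {z \<in> X. z mod t = \<rho>}" unfolding Q_def \<rho>_def by auto
    show "{z \<in> X. z mod t = \<rho>} \<subseteq> (\<lambda>q. \<rho> + t * q) ` Q"
    proof
      fix z assume "z \<in> {z \<in> X. z mod t = \<rho>}"
      moreover have "z = z mod t + t * (z div t)" by simp
      ultimately show "z \<in> (\<lambda>q. \<rho> + t * q) ` Q" unfolding Q_def by (intro image_eqI[of _ _ "z div t"]) auto
    qed
  qed
  then have count: "runner_count t X \<rho> = card Q"
    unfolding runner_count_def using inj by (simp add: card_image inj_on_subset)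
  have "\<rho> + t * q' \<in> X" if "\<rho> + t * q \<in> X" "q' \<le> q" for q q'
    using that
  proof (induction q)
    case (Suc q)
    have "\<rho> + t * q = \<rho> + t * Suc q - t" by simp
    then show ?case using Suc closed[of "\<rho> + t * Suc q"] by (cases "q' = Suc q") auto
  qed simp
  then have Q: "{..<card Q} = Q"
    using finite_vimageI[OF fin inj] unfolding Q_def by (intro downward_closed_eq_lessThan[symmetric]) auto
  have "x \<in> abacus t (runner_count t X) \<longleftrightarrow> x div t \<in> {..<card Q}"
    unfolding abacus_def count[unfolded \<rho>_def, symmetric] by simp
  also have "\<dots> \<longleftrightarrow> x div t \<in> Q" by (simp only: Q)
  also have "\<dots> \<longleftrightarrow> \<rho> + t * (x div t) \<in> X" unfolding Q_def by simp
  finally show "x \<in> abacus t (runner_count t X) \<longleftrightarrow> x \<in> X" unfolding \<rho>_def by simp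
qed

lemma remove_rim_hooks_runner_count:
  assumes "(remove_rim_hook t)\<^sup>*\<^sup>* lam mu" "is_partition lam" "length lam \<le> l" "1 \<le> t"
  shows "is_partition mu \<and> length mu \<le> l \<and>
    runner_count t (beta_set mu l) = runner_count t (beta_set lam l)"
  using assms(1)
proof (induction rule: rtranclp_induct)
  case (step nu mu)
  then have nu: "is_partition nu" "length nu \<le> l" by auto
  note moved = remove_rim_hook_beta_set[OF nu assms(4) step(2)]
  then obtain x where "x \<in> beta_set nu l" "t \<le> x" "x - t \<notin> beta_set nu l"
    "beta_set mu l = insert (x - t) (beta_set nu l - {x})" by blast
  then have "runner_count t (beta_set mu l) = runner_count t (beta_set nu l)"
    using runner_count_bead_move[OF finite_beta_set] by simp
  then show ?case using moved(1,2) nu step.IH by simp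
qed (use assms in simp)

lemma no_rim_hook_abacus:
  assumes "is_partition mu" "length mu \<le> l" "1 \<le> t" "\<nexists>nu. remove_rim_hook t mu nu"
  shows "abacus t (runner_count t (beta_set mu l)) = beta_set mu l"
proof (rule abacus_runner_count[OF finite_beta_set assms(3)])
  fix x assume "x \<in> beta_set mu l" "t \<le> x"
  then show "x - t \<in> beta_set mu l"
    using bead_move_remove_rim_hook[OF assms(1-3)] assms(4) by metis
qed

lemma rim_hook_removal_terminates:
  assumes "is_partition lam" "length lam \<le> l" "1 \<le> t"
  shows "\<exists>mu. (remove_rim_hook t)\<^sup>*\<^sup>* lam mu \<and> (\<nexists>nu. remove_rim_hook t mu nu)"
  using assms
proof (induction "\<Sum>(beta_set lam l)" arbitrary: lam rule: less_induct)
  case less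
  show ?case
  proof (cases "\<exists>x\<in>beta_set lam l. t \<le> x \<and> x - t \<notin> beta_set lam l")
    case False
    then show ?thesis using remove_rim_hook_beta_set(3)[OF less.prems] by blast
  next
    case True
    then obtain x where x: "x \<in> beta_set lam l" "t \<le> x" "x - t \<notin> beta_set lam l" by blast
    obtain nu where nu: "remove_rim_hook t lam nu" "length nu \<le> length lam"
      "beta_set nu l = insert (x - t) (beta_set lam l - {x})"
      using bead_move_remove_rim_hook[OF less.prems x] by blast
    have "is_partition nu" using nu(1) unfolding remove_rim_hook_def by simp
    moreover have "\<Sum>(beta_set nu l) < \<Sum>(beta_set lam l)"
      using sum_bead_move_less[OF finite_beta_set x less.prems(3)] nu(3) by simp
    ultimately obtain mu where "(remove_rim_hook t)\<^sup>*\<^sup>* nu mu" "\<nexists>nu'. remove_rim_hook t mu nu'"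
      using less.hyps less.prems(2,3) nu(2) by fastforce
    then show ?thesis using nu(1) by (meson converse_rtranclp_into_rtranclp)
  qed
qed

lemma beta_set_tcore:
  assumes "is_partition lam" "length lam \<le> l" "1 \<le> t"
  shows "is_partition (tcore t lam)" "length (tcore t lam) \<le> l"
    "beta_set (tcore t lam) l = abacus t (runner_count t (beta_set lam l))"
proof -
  let ?core = "\<lambda>mu. (remove_rim_hook t)\<^sup>*\<^sup>* lam mu \<and> (\<nexists>nu. remove_rim_hook t mu nu)"
  have core_props: "is_partition mu \<and> length mu \<le> l \<and>
      beta_set mu l = abacus t (runner_count t (beta_set lam l))" if "?core mu" for mu
    using remove_rim_hooks_runner_count[OF _ assms] no_rim_hook_abacus[of mu l t] that assms(3)
    by metis
  obtain mu where mu: "?core mu" using rim_hook_removal_terminates[OF assms] by blast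
  have "tcore t lam = mu"
    unfolding tcore_def
  proof (rule the_equality)
    fix mu' assume "?core mu'"
    then show "mu' = mu" using core_props mu beta_set_inject by metis
  qed (rule mu)
  then show "is_partition (tcore t lam)" "length (tcore t lam) \<le> l"
    "beta_set (tcore t lam) l = abacus t (runner_count t (beta_set lam l))"
    using core_props[OF mu] by simp_all
qed

section \<open>Frobenius coordinates from the beta-set\<close>

lemma le_rk_iff:
  assumes mu: "is_partition mu" and i: "1 \<le> i"
  shows "i \<le> rk mu \<longleftrightarrow> i \<le> part mu i"
proof -
  define Q where "Q = {j. 1 \<le> j \<and> j \<le> part mu j}"
  have "Q \<subseteq> {..length mu}"
  proof
    fix j assume "j \<in> Q"
    then show "j \<in> {..length mu}" using part_eq_0[of mu j] unfolding Q_def by (cases "j \<le> length mu") auto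
  qed
  then have finQ: "finite Q" by (rule finite_subset) simp
  have rk: "rk mu = Max ({0} \<union> Q)" unfolding rk_def Q_def by simp
  show ?thesis
  proof
    assume le: "i \<le> rk mu"
    have "rk mu \<in> {0} \<union> Q" unfolding rk using finQ by (intro Max_in) auto
    then have "rk mu \<le> part mu (rk mu)" using le i unfolding Q_def by auto
    then show "i \<le> part mu i" using part_antimono[OF mu i le] le by simp
  next
    assume "i \<le> part mu i"
    then have "i \<in> Q" unfolding Q_def using i by simp
    then show "i \<le> rk mu" unfolding rk using finQ by (intro Max_ge) auto
  qed
qed

lemma rk_le_length:
  assumes mu: "is_partition mu"
  shows "rk mu \<le> length mu"
proof (rule ccontr)
  assume long: "\<not> rk mu \<le> length mu"
  then have "rk mu \<le> part mu (rk mu)" using le_rk_iff[OF mu, of "rk mu"] by simp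
  then show False using part_eq_0[of mu "rk mu"] long by simp
qed

lemma length_frob_arms [simp]: "length (frob_arms mu) = rk mu"
  unfolding frob_arms_def by (simp del: upt_Suc)

lemma sorted_frob_arms:
  assumes mu: "is_partition mu"
  shows "sorted_wrt (>) (frob_arms mu)"
  unfolding frob_arms_def sorted_wrt_iff_nth_less
proof (intro allI impI)
  fix i j assume ij: "i < j" "j < length (map (\<lambda>i. part mu i - i) [1..<rk mu + 1])"
  then have "Suc j \<le> part mu (Suc j)" using le_rk_iff[OF mu, of "Suc j"] by (simp del: upt_Suc)
  moreover have "part mu (Suc j) \<le> part mu (Suc i)" using part_antimono[OF mu, of "Suc i" "Suc j"] ij by simp
  ultimately show "map (\<lambda>i. part mu i - i) [1..<rk mu + 1] ! j < map (\<lambda>i. part mu i - i) [1..<rk mu + 1] ! i"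
    using ij by (simp del: upt_Suc add: nth_upt)
qed

lemma set_frob_arms:
  assumes mu: "is_partition mu" and len: "length mu \<le> l"
  shows "set (frob_arms mu) = {a. a + l \<in> beta_set mu l}"
proof -
  have "a + l \<in> beta_set mu l \<longleftrightarrow> (\<exists>j\<in>{1..rk mu}. a = part mu j - j)" for a
  proof
    assume "a + l \<in> beta_set mu l"
    then obtain j where j: "1 \<le> j" "j \<le> l" "a + l = part mu j + l - j"
      unfolding beta_set_def beta_num_def by auto
    then have "j \<le> part mu j" by arith
    then have "j \<le> rk mu" "a = part mu j - j" using le_rk_iff[OF mu j(1)] j(3) by auto
    then show "\<exists>j\<in>{1..rk mu}. a = part mu j - j" using j(1) by auto
  next
    assume "\<exists>j\<in>{1..rk mu}. a = part mu j - j"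
    then obtain j where j: "1 \<le> j" "j \<le> rk mu" "a = part mu j - j" by auto
    then have "j \<le> part mu j" "j \<le> l" using le_rk_iff[OF mu j(1)] rk_le_length[OF mu] len by auto
    then have "a + l = beta_num mu l j" using j unfolding beta_num_def by simp
    then show "a + l \<in> beta_set mu l" unfolding beta_set_def using j \<open>j \<le> l\<close> by auto
  qed
  then show ?thesis unfolding frob_arms_def by (auto simp del: upt_Suc)
qed

lemma card_beta_set_ge:
  assumes mu: "is_partition mu" and len: "length mu \<le> l"
  shows "card {x \<in> beta_set mu l. l \<le> x} = rk mu"
proof -
  have "{x \<in> beta_set mu l. l \<le> x} = (\<lambda>a. a + l) ` set (frob_arms mu)"
    unfolding set_frob_arms[OF assms]
  proof (intro set_eqI iffI)
    fix x assume "x \<in> {x \<in> beta_set mu l. l \<le> x}"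
    then show "x \<in> (\<lambda>a. a + l) ` {a. a + l \<in> beta_set mu l}" by (intro image_eqI[of _ _ "x - l"]) auto
  qed auto
  moreover have "card (set (frob_arms mu)) = rk mu"
    using distinct_card[OF sorted_wrt_greater_distinct[OF sorted_frob_arms[OF mu]]]
    by (simp add: frob_arms_def del: upt_Suc)
  ultimately show ?thesis by (simp add: card_image inj_on_def)
qed

lemma le_conj_part_iff:
  assumes mu: "is_partition mu" and i: "1 \<le> i" and j: "1 \<le> j"
  shows "i \<le> part mu j \<longleftrightarrow> j \<le> conj_part mu i"
proof -
  define Q where "Q = {j. i \<le> part mu (Suc j)}"
  have "Q \<subseteq> {..<length mu}"
  proof
    fix q assume "q \<in> Q"
    then show "q \<in> {..<length mu}"
      using part_eq_0[of mu "Suc q"] i unfolding Q_def by (cases "Suc q \<le> length mu") auto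
  qed
  then have "finite Q" by (rule finite_subset) simp
  moreover have "q' \<in> Q" if "q \<in> Q" "q' \<le> q" for q q'
    using that part_antimono[OF mu, of "Suc q'" "Suc q"] unfolding Q_def by simp
  ultimately have Q: "Q = {..<card Q}" by (rule downward_closed_eq_lessThan)
  have "{j. 1 \<le> j \<and> i \<le> part mu j} = Suc ` Q"
  proof (intro set_eqI iffI)
    fix j assume "j \<in> {j. 1 \<le> j \<and> i \<le> part mu j}"
    then show "j \<in> Suc ` Q" unfolding Q_def by (intro image_eqI[of _ _ "j - 1"]) auto
  qed (auto simp: Q_def)
  then have conj: "conj_part mu i = card Q" unfolding conj_part_def by (simp add: card_image)
  have "i \<le> part mu j \<longleftrightarrow> j - 1 \<in> Q" unfolding Q_def using j by simp
  also have "\<dots> \<longleftrightarrow> j - 1 < card Q" by (subst Q) simp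
  finally show ?thesis unfolding conj using j by linarith
qed

lemma conj_part_antimono:
  assumes "is_partition mu" "1 \<le> i" "i \<le> i'"
  shows "conj_part mu i' \<le> conj_part mu i"
proof (cases "conj_part mu i' = 0")
  case False
  then have "i' \<le> part mu (conj_part mu i')" using le_conj_part_iff[OF assms(1)] assms by simp
  then show ?thesis using le_conj_part_iff[OF assms(1,2), of "conj_part mu i'"] assms(3) False by simp
qed simp

lemma sorted_frob_legs:
  assumes mu: "is_partition mu"
  shows "sorted_wrt (>) (frob_legs mu)"
  unfolding frob_legs_def sorted_wrt_iff_nth_less
proof (intro allI impI)
  fix i j assume ij: "i < j" "j < length (map (\<lambda>i. conj_part mu i - i) [1..<rk mu + 1])"
  then have "Suc j \<le> part mu (Suc j)" using le_rk_iff[OF mu, of "Suc j"] by (simp del: upt_Suc)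
  then have "Suc j \<le> conj_part mu (Suc j)" using le_conj_part_iff[OF mu] by simp
  moreover have "conj_part mu (Suc j) \<le> conj_part mu (Suc i)" using conj_part_antimono[OF mu] ij by simp
  ultimately show "map (\<lambda>i. conj_part mu i - i) [1..<rk mu + 1] ! j < map (\<lambda>i. conj_part mu i - i) [1..<rk mu + 1] ! i"
    using ij by (simp del: upt_Suc add: nth_upt)
qed

lemma frob_legs_subset_reflected_gaps:
  assumes mu: "is_partition mu" and len: "length mu \<le> l"
  shows "set (frob_legs mu) \<subseteq> {b. b < l \<and> l - 1 - b \<notin> beta_set mu l}"
proof
  fix b assume "b \<in> set (frob_legs mu)"
  then obtain i where i: "1 \<le> i" "i \<le> rk mu" and b: "b = conj_part mu i - i"
    unfolding frob_legs_def by (auto simp del: upt_Suc)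
  define m where "m = conj_part mu i"
  have "i \<le> part mu i" using le_rk_iff[OF mu i(1)] i(2) by simp
  then have "i \<le> m" unfolding m_def using le_conj_part_iff[OF mu i(1) i(1)] by simp
  moreover have "m \<le> l"
  proof (cases "m = 0")
    case False
    then have "i \<le> part mu m" using le_conj_part_iff[OF mu i(1)] unfolding m_def by simp
    then show ?thesis using part_eq_0[of mu m] i(1) len by (cases "m \<le> length mu") auto
  qed simp
  moreover have "l - 1 - b \<notin> beta_set mu l"
  proof
    assume "l - 1 - b \<in> beta_set mu l"
    then obtain j where j: "1 \<le> j" "j \<le> l" "l - 1 - b = part mu j + l - j"
      unfolding beta_set_def beta_num_def by auto
    show False
      using le_conj_part_iff[OF mu i(1) j(1)] \<open>i \<le> m\<close> \<open>m \<le> l\<close> j i(1)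
      unfolding b m_def[symmetric] by (cases "j \<le> m") auto
  qed
  ultimately show "b \<in> {b. b < l \<and> l - 1 - b \<notin> beta_set mu l}"
    unfolding b m_def[symmetric] using i(1) by auto
qed

lemma card_reflected_gaps:
  assumes mu: "is_partition mu" and len: "length mu \<le> l"
  shows "card {b. b < l \<and> l - 1 - b \<notin> beta_set mu l} = rk mu"
proof -
  let ?B = "beta_set mu l"
  have "{x \<in> ?B. x < l} \<inter> {x \<in> ?B. l \<le> x} = {}" by auto
  moreover have "{x \<in> ?B. x < l} \<union> {x \<in> ?B. l \<le> x} = ?B" by auto
  ultimately have below: "card {x \<in> ?B. x < l} + rk mu = l"
    using card_Un_disjoint[of "{x \<in> ?B. x < l}" "{x \<in> ?B. l \<le> x}"]
      card_beta_set[OF mu, of l] card_beta_set_ge[OF assms] by simp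
  have "(\<lambda>b. l - 1 - b) ` {b. b < l \<and> l - 1 - b \<notin> ?B} = {y. y < l \<and> y \<notin> ?B}"
  proof
    show "{y. y < l \<and> y \<notin> ?B} \<subseteq> (\<lambda>b. l - 1 - b) ` {b. b < l \<and> l - 1 - b \<notin> ?B}"
    proof
      fix y assume "y \<in> {y. y < l \<and> y \<notin> ?B}"
      then show "y \<in> (\<lambda>b. l - 1 - b) ` {b. b < l \<and> l - 1 - b \<notin> ?B}"
        by (intro image_eqI[of _ _ "l - 1 - y"]) auto
    qed
  qed auto
  moreover have "inj_on (\<lambda>b. l - 1 - b) {b. b < l \<and> l - 1 - b \<notin> ?B}" by (auto simp: inj_on_def)
  ultimately have "card {b. b < l \<and> l - 1 - b \<notin> ?B} = card {y. y < l \<and> y \<notin> ?B}"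
    using card_image by fastforce
  also have "{y. y < l \<and> y \<notin> ?B} = {..<l} - {x \<in> ?B. x < l}" by auto
  also have "card \<dots> = l - card {x \<in> ?B. x < l}"
    using card_Diff_subset[of "{x \<in> ?B. x < l}" "{..<l}"] by auto
  also have "\<dots> = rk mu" using below by simp
  finally show ?thesis .
qed

text \<open>Each leg \<open>b\<close> is witnessed by the gap \<open>l - 1 - b\<close>; since there are \<open>l - rk mu\<close> beads below \<open>l\<close>,
  the numbers of legs and of gaps below \<open>l\<close> agree.\<close>

lemma set_frob_legs:
  assumes mu: "is_partition mu" and len: "length mu \<le> l"
  shows "set (frob_legs mu) = {b. b < l \<and> l - 1 - b \<notin> beta_set mu l}"
proof (rule card_subset_eq)
  show "card (set (frob_legs mu)) = card {b. b < l \<and> l - 1 - b \<notin> beta_set mu l}"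
    using distinct_card[OF sorted_wrt_greater_distinct[OF sorted_frob_legs[OF mu]]] card_reflected_gaps[OF assms]
    by (simp add: frob_legs_def del: upt_Suc)
qed (use frob_legs_subset_reflected_gaps[OF assms] in simp_all)

text \<open>The list form of the legs in the definition of \<open>asymmetric 1 0 k\<close> is determined by its set.\<close>

lemma sorted_wrt_greater_eq_omit_iff:
  fixes A L :: "nat list"
  assumes sA: "sorted_wrt (>) A" and sL: "sorted_wrt (>) L"
  shows "(\<exists>k. 1 \<le> k \<and> k \<le> length A \<and> L = (take (k - 1) (map Suc A) @ drop k (map Suc A)) @ [0])
     \<longleftrightarrow> (\<exists>a\<in>set A. set L = insert 0 (Suc ` (set A - {a})))"
proof -
  define ys where "ys = map Suc A"
  have sys: "sorted_wrt (>) ys" unfolding ys_def using sA by (simp add: sorted_wrt_map)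
  have omit: "set (take i ys @ drop (Suc i) ys) = Suc ` (set A - {A ! i})" if "i < length A" for i
  proof -
    have "set (take i ys @ drop (Suc i) ys) = set ys - {ys ! i}"
      using set_take_drop_Suc[OF sorted_wrt_greater_distinct[OF sys]] that unfolding ys_def by simp
    also have "\<dots> = Suc ` (set A - {A ! i})" unfolding ys_def using that by auto
    finally show ?thesis .
  qed
  show ?thesis
  proof
    assume "\<exists>k. 1 \<le> k \<and> k \<le> length A \<and> L = (take (k - 1) (map Suc A) @ drop k (map Suc A)) @ [0]"
    then obtain k where k: "1 \<le> k" "k \<le> length A" "L = (take (k - 1) ys @ drop (Suc (k - 1)) ys) @ [0]"
      unfolding ys_def by auto
    then have "set L = insert 0 (Suc ` (set A - {A ! (k - 1)}))" using omit[of "k - 1"] by auto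
    moreover have "A ! (k - 1) \<in> set A" using k by simp
    ultimately show "\<exists>a\<in>set A. set L = insert 0 (Suc ` (set A - {a}))" by blast
  next
    assume "\<exists>a\<in>set A. set L = insert 0 (Suc ` (set A - {a}))"
    then obtain i where i: "i < length A" and L: "set L = insert 0 (Suc ` (set A - {A ! i}))"
      by (auto simp: in_set_conv_nth)
    define R where "R = (take i ys @ drop (Suc i) ys) @ [0]"
    have "sorted_wrt (>) R"
      using sorted_wrt_take_drop_Suc[OF sys, of i] omit[OF i] i unfolding R_def ys_def
      by (auto simp: sorted_wrt_append)
    moreover have "set R = set L" unfolding R_def using omit[OF i] L by simp
    ultimately have "L = R" using sorted_wrt_greater_unique[OF sL] by simp
    then show "\<exists>k. 1 \<le> k \<and> k \<le> length A \<and> L = (take (k - 1) (map Suc A) @ drop k (map Suc A)) @ [0]"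
      using i unfolding R_def ys_def by (intro exI[of _ "Suc i"]) simp
  qed
qed

lemma asymmetric_1_0_iff:
  assumes "is_partition mu"
  shows "asymmetric 1 0 k mu \<longleftrightarrow> 1 \<le> k \<and> k \<le> rk mu \<and>
    frob_legs mu = (take (k - 1) (map Suc (frob_arms mu)) @ drop k (map Suc (frob_arms mu))) @ [0]"
proof -
  have "(\<lambda>a. a + 1) = Suc" by auto
  then show ?thesis
    unfolding asymmetric_def Let_def using sorted_frob_arms[OF assms] by simp
qed

lemma asymmetric_iff_frob_sets:
  assumes "is_partition mu"
  shows "(\<exists>k. 1 \<le> k \<and> k \<le> rk mu \<and> asymmetric 1 0 k mu) \<longleftrightarrow>
    (\<exists>a\<in>set (frob_arms mu). set (frob_legs mu) = insert 0 (Suc ` (set (frob_arms mu) - {a})))"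
proof -
  have "(\<exists>k. 1 \<le> k \<and> k \<le> rk mu \<and> asymmetric 1 0 k mu) \<longleftrightarrow>
      (\<exists>k. 1 \<le> k \<and> k \<le> length (frob_arms mu) \<and>
         frob_legs mu = (take (k - 1) (map Suc (frob_arms mu)) @ drop k (map Suc (frob_arms mu))) @ [0])"
    unfolding asymmetric_1_0_iff[OF assms] by auto
  also have "\<dots> \<longleftrightarrow> (\<exists>a\<in>set (frob_arms mu). set (frob_legs mu) = insert 0 (Suc ` (set (frob_arms mu) - {a})))"
    by (rule sorted_wrt_greater_eq_omit_iff[OF sorted_frob_arms[OF assms] sorted_frob_legs[OF assms]])
  finally show ?thesis .
qed

text \<open>Asymmetry read off the beta-set \<open>Y\<close> with \<open>N + 1\<close> beta-numbers: the legs are the \<open>z \<le> N\<close>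
  for which \<open>N - z\<close> is a gap, the arms shifted up by one are the \<open>z > 0\<close> for which \<open>N + z\<close> is a
  bead, and \<open>x\<close> is the bead of the omitted arm.\<close>

definition asymmetric_beta_set :: "nat \<Rightarrow> nat set \<Rightarrow> nat \<Rightarrow> bool" where
  "asymmetric_beta_set N Y x \<longleftrightarrow> N < x \<and> x \<in> Y \<and>
     {z. z \<le> N \<and> N - z \<notin> Y} = insert 0 {z. 0 < z \<and> N + z \<in> Y \<and> N + z \<noteq> x}"

lemma asymmetric_iff_asymmetric_beta_set:
  assumes mu: "is_partition mu" and len: "length mu \<le> N + 1"
  shows "(\<exists>k. 1 \<le> k \<and> k \<le> rk mu \<and> asymmetric 1 0 k mu) \<longleftrightarrow>
    (\<exists>x. asymmetric_beta_set N (beta_set mu (N + 1)) x)"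
proof -
  let ?Y = "beta_set mu (N + 1)"
  have shift: "Suc ` ({a. a + (N + 1) \<in> ?Y} - {a}) = {z. 0 < z \<and> N + z \<in> ?Y \<and> N + z \<noteq> a + (N + 1)}" for a
  proof (intro set_eqI iffI)
    fix z assume "z \<in> {z. 0 < z \<and> N + z \<in> ?Y \<and> N + z \<noteq> a + (N + 1)}"
    then show "z \<in> Suc ` ({a. a + (N + 1) \<in> ?Y} - {a})" by (intro image_eqI[of _ _ "z - 1"]) (auto simp: add.commute)
  qed (auto simp: add.commute)
  let ?G = "{z. z \<le> N \<and> N - z \<notin> ?Y}" and ?B = "\<lambda>x. {z. 0 < z \<and> N + z \<in> ?Y \<and> N + z \<noteq> x}"
  have legs: "{b. b < N + 1 \<and> N + 1 - 1 - b \<notin> ?Y} = ?G" by auto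
  have "(\<exists>k. 1 \<le> k \<and> k \<le> rk mu \<and> asymmetric 1 0 k mu) \<longleftrightarrow>
      (\<exists>a. a + (N + 1) \<in> ?Y \<and> ?G = insert 0 (?B (a + (N + 1))))"
    unfolding asymmetric_iff_frob_sets[OF mu] set_frob_arms[OF mu len] set_frob_legs[OF mu len] shift legs
    by simp
  also have "\<dots> \<longleftrightarrow> (\<exists>x. asymmetric_beta_set N ?Y x)"
  proof
    assume "\<exists>a. a + (N + 1) \<in> ?Y \<and> ?G = insert 0 (?B (a + (N + 1)))"
    then obtain a where "a + (N + 1) \<in> ?Y" "?G = insert 0 (?B (a + (N + 1)))" by blast
    then show "\<exists>x. asymmetric_beta_set N ?Y x"
      unfolding asymmetric_beta_set_def by (intro exI[of _ "a + (N + 1)"]) simp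
  next
    assume "\<exists>x. asymmetric_beta_set N ?Y x"
    then obtain x where x: "N < x" "x \<in> ?Y" "?G = insert 0 (?B x)"
      unfolding asymmetric_beta_set_def by blast
    moreover have "x - (N + 1) + (N + 1) = x" using x(1) by simp
    ultimately show "\<exists>a. a + (N + 1) \<in> ?Y \<and> ?G = insert 0 (?B (a + (N + 1)))"
      by (intro exI[of _ "x - (N + 1)"]) simp
  qed
  finally show ?thesis .
qed

section \<open>Asymmetric cores on the abacus\<close>

lemma abacus_mem: "\<rho> < t \<Longrightarrow> \<rho> + t * q \<in> abacus t c \<longleftrightarrow> q < c \<rho>"
  unfolding abacus_def by simp

lemma runner_row_inject:
  fixes t \<rho> \<rho>' q q' :: nat
  assumes "\<rho> < t" "\<rho>' < t"
  shows "\<rho> + t * q = \<rho>' + t * q' \<longleftrightarrow> \<rho> = \<rho>' \<and> q = q'"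
proof
  assume eq: "\<rho> + t * q = \<rho>' + t * q'"
  have "(\<rho> + t * q) mod t = (\<rho>' + t * q') mod t" "(\<rho> + t * q) div t = (\<rho>' + t * q') div t"
    using eq by simp_all
  then show "\<rho> = \<rho>' \<and> q = q'" using assms by simp
qed simp

lemma less_add_mult_iff:
  fixes t \<rho> n q :: nat
  assumes "\<rho> < t"
  shows "t * n < \<rho> + t * q \<longleftrightarrow> n \<le> q \<and> (0 < \<rho> \<or> n < q)"
proof (cases "q < n")
  case True
  then have "t * Suc q \<le> t * n" by (intro mult_le_mono2) simp
  then show ?thesis using True assms by simp
next
  case False
  then have le: "t * n \<le> t * q" by simp
  show ?thesis
  proof
    assume "t * n < \<rho> + t * q"
    then show "n \<le> q \<and> (0 < \<rho> \<or> n < q)" using False by (cases "n = q") auto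
  next
    assume "n \<le> q \<and> (0 < \<rho> \<or> n < q)"
    then consider "0 < \<rho>" | "n < q" by blast
    then show "t * n < \<rho> + t * q"
    proof cases
      case 2
      then have "t * n < t * q" using assms by simp
      then show ?thesis by linarith
    qed (use le in linarith)
  qed
qed

lemma abacus_shifted_bead_iff:
  assumes "\<rho> < t"
  shows "t * n + (\<rho> + t * q) \<in> abacus t c \<longleftrightarrow> q < c \<rho> - n"
proof -
  have "t * n + (\<rho> + t * q) = \<rho> + t * (n + q)" by (simp add: algebra_simps)
  then have "t * n + (\<rho> + t * q) \<in> abacus t c \<longleftrightarrow> n + q < c \<rho>" by (simp only: abacus_mem[OF assms])
  then show ?thesis by arith
qed

lemma abacus_reflected_gap_iff:
  assumes "0 < \<rho>" "\<rho> < t"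
  shows "\<rho> + t * q \<le> t * n \<and> t * n - (\<rho> + t * q) \<notin> abacus t c \<longleftrightarrow> q < n - c (t - \<rho>)"
proof (cases "q < n")
  case True
  then obtain k where n: "n = q + 1 + k" by (metis add.commute less_imp_Suc_add Suc_eq_plus1 add_Suc)
  then have "t * n = (\<rho> + t * q) + ((t - \<rho>) + t * k)" using assms(2) by (simp add: algebra_simps)
  then have "t * n - (\<rho> + t * q) = (t - \<rho>) + t * (n - q - 1)" using n by simp
  then show ?thesis using True abacus_mem[of "t - \<rho>" t "n - q - 1" c] assms by auto
next
  case False
  then have "t * n \<le> t * q" by simp
  then have "\<not> \<rho> + t * q \<le> t * n" using assms(1) by linarith
  moreover have "\<not> q < n - c (t - \<rho>)" using False by linarith
  ultimately show ?thesis by simp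
qed

lemma abacus_reflected_gap_0_iff:
  assumes "0 < t"
  shows "t * q \<le> t * n \<and> t * n - t * q \<notin> abacus t c \<longleftrightarrow> q \<le> n \<and> c 0 + q \<le> n"
proof -
  have "t * n - t * q = 0 + t * (n - q)" by (simp add: diff_mult_distrib2)
  then show ?thesis using abacus_mem[of 0 t "n - q" c] assms by auto
qed

lemma set_eq_iff_runners:
  fixes A B :: "nat set"
  assumes t: "0 < t"
  shows "A = B \<longleftrightarrow> (\<forall>q. t * q \<in> A \<longleftrightarrow> t * q \<in> B) \<and>
    (\<forall>\<rho>. 0 < \<rho> \<and> \<rho> < t \<longrightarrow> (\<forall>q. \<rho> + t * q \<in> A \<longleftrightarrow> \<rho> + t * q \<in> B))"
proof
  assume runners: "(\<forall>q. t * q \<in> A \<longleftrightarrow> t * q \<in> B) \<and>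
    (\<forall>\<rho>. 0 < \<rho> \<and> \<rho> < t \<longrightarrow> (\<forall>q. \<rho> + t * q \<in> A \<longleftrightarrow> \<rho> + t * q \<in> B))"
  show "A = B"
  proof (intro set_eqI)
    fix z
    have "\<forall>q. z mod t + t * q \<in> A \<longleftrightarrow> z mod t + t * q \<in> B" using runners t by (cases "z mod t = 0") auto
    then have "z mod t + t * (z div t) \<in> A \<longleftrightarrow> z mod t + t * (z div t) \<in> B" by (rule spec)
    then show "z \<in> A \<longleftrightarrow> z \<in> B" by (simp only: mod_mult_div_eq)
  qed
qed simp

lemma runner_0_condition_iff:
  fixes n c\<^sub>0 :: nat
  shows "(\<forall>q. q \<le> n \<and> c\<^sub>0 + q \<le> n \<longleftrightarrow> q = 0 \<or> (0 < q \<and> q < c\<^sub>0 - n \<and> P q)) \<longleftrightarrow> c\<^sub>0 = n"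
proof
  assume all: "\<forall>q. q \<le> n \<and> c\<^sub>0 + q \<le> n \<longleftrightarrow> q = 0 \<or> (0 < q \<and> q < c\<^sub>0 - n \<and> P q)"
  have "c\<^sub>0 \<le> n" using all[rule_format, of 0] by simp
  moreover have "\<not> c\<^sub>0 + 1 \<le> n" using all[rule_format, of 1] \<open>c\<^sub>0 \<le> n\<close> by auto
  ultimately show "c\<^sub>0 = n" by simp
qed auto

text \<open>Splitting the defining set equation of \<open>asymmetric_beta_set\<close> along the runners of the abacus:
  runner \<open>0\<close> forces \<open>c 0 = n\<close>, and the reflected gaps on runner \<open>\<rho> > 0\<close> come from runner \<open>t - \<rho>\<close>.\<close>

lemma asymmetric_abacus_iff_runners:
  assumes t: "0 < t" and \<rho>a: "\<rho>a < t"
  shows "asymmetric_beta_set (t * n) (abacus t c) (\<rho>a + t * qa) \<longleftrightarrow>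
    c 0 = n \<and> 0 < \<rho>a \<and> n \<le> qa \<and> qa < c \<rho>a \<and>
    (\<forall>\<rho>. 0 < \<rho> \<and> \<rho> < t \<longrightarrow> {..<n - c (t - \<rho>)} = {..<c \<rho> - n} - (if \<rho> = \<rho>a then {qa - n} else {}))"
proof -
  let ?Y = "abacus t c" and ?x = "\<rho>a + t * qa"
  let ?G = "{z. z \<le> t * n \<and> t * n - z \<notin> ?Y}" and ?B = "{z. 0 < z \<and> t * n + z \<in> ?Y \<and> t * n + z \<noteq> ?x}"
  let ?on = "\<lambda>\<rho>. \<forall>q. \<rho> + t * q \<in> ?G \<longleftrightarrow> \<rho> + t * q \<in> insert 0 ?B"
  let ?row = "\<lambda>\<rho>. \<forall>q. q < n - c (t - \<rho>) \<longleftrightarrow> q < c \<rho> - n \<and> \<not> (\<rho> = \<rho>a \<and> n + q = qa)"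
  have hit: "t * n + (\<rho> + t * q) = ?x \<longleftrightarrow> \<rho> = \<rho>a \<and> n + q = qa" if "\<rho> < t" for \<rho> q
  proof -
    have "t * n + (\<rho> + t * q) = \<rho> + t * (n + q)" by (simp add: algebra_simps)
    then show ?thesis using runner_row_inject[OF that \<rho>a, of "n + q" qa] by (simp only:)
  qed
  have "(\<forall>q. t * q \<in> ?G \<longleftrightarrow> t * q \<in> insert 0 ?B) \<longleftrightarrow>
      (\<forall>q. q \<le> n \<and> c 0 + q \<le> n \<longleftrightarrow> q = 0 \<or> (0 < q \<and> q < c 0 - n \<and> \<not> (0 = \<rho>a \<and> n + q = qa)))"
    using abacus_reflected_gap_0_iff[OF t, of _ n c] abacus_shifted_bead_iff[OF t, of n _ c] hit[OF t] t
    by simp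
  also have "\<dots> \<longleftrightarrow> c 0 = n" by (rule runner_0_condition_iff)
  finally have on0: "(\<forall>q. t * q \<in> ?G \<longleftrightarrow> t * q \<in> insert 0 ?B) \<longleftrightarrow> c 0 = n" .
  have runners: "?G = insert 0 ?B \<longleftrightarrow>
      (\<forall>q. t * q \<in> ?G \<longleftrightarrow> t * q \<in> insert 0 ?B) \<and> (\<forall>\<rho>. 0 < \<rho> \<and> \<rho> < t \<longrightarrow> ?on \<rho>)"
    by (rule set_eq_iff_runners[OF t])
  have on: "?on \<rho> \<longleftrightarrow> ?row \<rho>" if "0 < \<rho>" "\<rho> < t" for \<rho>
  proof -
    have "\<rho> + t * q \<in> ?G \<longleftrightarrow> q < n - c (t - \<rho>)" for q
      using abacus_reflected_gap_iff[OF that, of q n c] by simp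
    moreover have "\<rho> + t * q \<in> insert 0 ?B \<longleftrightarrow> q < c \<rho> - n \<and> \<not> (\<rho> = \<rho>a \<and> n + q = qa)" for q
      using abacus_shifted_bead_iff[OF that(2), of n q c] hit[OF that(2), of q] that(1) by auto
    ultimately show ?thesis by simp
  qed
  have row: "?row \<rho> \<longleftrightarrow> {..<n - c (t - \<rho>)} = {..<c \<rho> - n} - (if \<rho> = \<rho>a then {qa - n} else {})"
    if "n \<le> qa" for \<rho>
  proof -
    have "q \<in> (if \<rho> = \<rho>a then {qa - n} else {}) \<longleftrightarrow> \<rho> = \<rho>a \<and> n + q = qa" for q
      using that by auto
    then show ?thesis by (simp add: set_eq_iff)
  qed
  have pos: "0 < \<rho>a" if "c 0 = n" "qa < c \<rho>a" "0 < \<rho>a \<or> n < qa" using that by (cases \<rho>a) auto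
  define rows where "rows \<longleftrightarrow> (\<forall>\<rho>. 0 < \<rho> \<and> \<rho> < t \<longrightarrow> ?row \<rho>)"
  define sets where "sets \<longleftrightarrow>
    (\<forall>\<rho>. 0 < \<rho> \<and> \<rho> < t \<longrightarrow> {..<n - c (t - \<rho>)} = {..<c \<rho> - n} - (if \<rho> = \<rho>a then {qa - n} else {}))"
  have all_on: "(\<forall>\<rho>. 0 < \<rho> \<and> \<rho> < t \<longrightarrow> ?on \<rho>) \<longleftrightarrow> rows" unfolding rows_def using on by blast
  have rows_sets: "rows \<longleftrightarrow> sets" if "n \<le> qa" unfolding rows_def sets_def by (simp only: row[OF that])
  show ?thesis
    unfolding asymmetric_beta_set_def runners on0 all_on abacus_mem[OF \<rho>a] less_add_mult_iff[OF \<rho>a]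
      sets_def[symmetric]
    using pos rows_sets by blast
qed

text \<open>The runner conditions for a pair of runners \<open>\<rho>, t - \<rho>\<close> in terms of their bead counts
  \<open>a, b\<close>; the bead of the omitted arm sits in row \<open>n + e\<close> of the first runner.\<close>

lemma runner_pair_iff:
  fixes a b n :: nat
  shows "{..<n - b} = {..<a - n} \<and> {..<n - a} = {..<b - n} \<longleftrightarrow> a + b = 2 * n"
  unfolding lessThan_eq_iff by linarith

lemma runner_pair_exceptional_iff:
  fixes a b n e :: nat
  assumes "e < a - n"
  shows "{..<n - b} = {..<a - n} - {e} \<and> {..<n - a} = {..<b - n} \<longleftrightarrow> a + b = 2 * n + 1 \<and> Suc e = a - n"
  unfolding lessThan_eq_Diff_singleton_iff[OF assms] lessThan_eq_iff using assms by linarith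

lemma runner_self_exceptional_iff:
  fixes a n e :: nat
  assumes "e < a - n"
  shows "{..<n - a} = {..<a - n} - {e} \<longleftrightarrow> a = Suc n \<and> e = 0"
  unfolding lessThan_eq_Diff_singleton_iff[OF assms] using assms by linarith

lemma all_runner_pairs_iff:
  fixes t :: nat
  shows "(\<forall>\<rho>. 0 < \<rho> \<and> \<rho> < t \<longrightarrow> P \<rho>) \<longleftrightarrow> (\<forall>\<rho>. 0 < \<rho> \<and> \<rho> < t \<longrightarrow> P \<rho> \<and> P (t - \<rho>))"
proof
  assume all: "\<forall>\<rho>. 0 < \<rho> \<and> \<rho> < t \<longrightarrow> P \<rho>"
  show "\<forall>\<rho>. 0 < \<rho> \<and> \<rho> < t \<longrightarrow> P \<rho> \<and> P (t - \<rho>)"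
  proof (intro allI impI conjI)
    fix \<rho> assume "0 < \<rho> \<and> \<rho> < t"
    then show "P \<rho>" "P (t - \<rho>)" using all all[rule_format, of "t - \<rho>"] by auto
  qed
qed blast

definition paired_runner_sums :: "nat \<Rightarrow> nat \<Rightarrow> (nat \<Rightarrow> nat) \<Rightarrow> nat \<Rightarrow> bool" where
  "paired_runner_sums t n c \<rho>a \<longleftrightarrow> (\<forall>\<rho>. 0 < \<rho> \<and> \<rho> < t \<longrightarrow>
     c \<rho> + c (t - \<rho>) = (if \<rho> = \<rho>a \<or> \<rho> = t - \<rho>a then 2 * n + 1 + (if 2 * \<rho>a = t then 1 else 0) else 2 * n))"

lemma runner_conditions_iff_sums:
  assumes \<rho>a: "0 < \<rho>a" "\<rho>a < t" and qa: "n \<le> qa" "qa < c \<rho>a"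
  shows "(\<forall>\<rho>. 0 < \<rho> \<and> \<rho> < t \<longrightarrow> {..<n - c (t - \<rho>)} = {..<c \<rho> - n} - (if \<rho> = \<rho>a then {qa - n} else {}))
    \<longleftrightarrow> Suc qa = c \<rho>a \<and> paired_runner_sums t n c \<rho>a"
proof -
  define cond where "cond \<rho> \<longleftrightarrow> {..<n - c (t - \<rho>)} = {..<c \<rho> - n} - (if \<rho> = \<rho>a then {qa - n} else {})" for \<rho>
  define sum where "sum \<rho> \<longleftrightarrow>
    c \<rho> + c (t - \<rho>) = (if \<rho> = \<rho>a \<or> \<rho> = t - \<rho>a then 2 * n + 1 + (if 2 * \<rho>a = t then 1 else 0) else 2 * n)"
    for \<rho>
  have e: "qa - n < c \<rho>a - n" using qa by simp
  have exceptional: "cond \<rho>a \<and> cond (t - \<rho>a) \<longleftrightarrow> c \<rho>a + c (t - \<rho>a) = 2 * n + 1 \<and> Suc qa = c \<rho>a"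
    if "2 * \<rho>a \<noteq> t"
  proof -
    have "t - \<rho>a \<noteq> \<rho>a" "t - (t - \<rho>a) = \<rho>a" using that \<rho>a by auto
    then show ?thesis using runner_pair_exceptional_iff[OF e, of "c (t - \<rho>a)"] qa unfolding cond_def by auto
  qed
  have pair: "cond \<rho> \<and> cond (t - \<rho>) \<longleftrightarrow> sum \<rho> \<and> ((\<rho> = \<rho>a \<or> t - \<rho> = \<rho>a) \<longrightarrow> Suc qa = c \<rho>a)"
    if \<rho>: "0 < \<rho>" "\<rho> < t" for \<rho>
  proof -
    have tt: "t - (t - \<rho>) = \<rho>" "t - (t - \<rho>a) = \<rho>a" using \<rho> \<rho>a by simp_all
    consider "\<rho> \<noteq> \<rho>a" "t - \<rho> \<noteq> \<rho>a" | "\<rho> = \<rho>a" "t - \<rho> \<noteq> \<rho>a" | "\<rho> \<noteq> \<rho>a" "t - \<rho> = \<rho>a"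
      | "\<rho> = \<rho>a" "t - \<rho> = \<rho>a"
      by blast
    then show ?thesis
    proof cases
      case 1
      then have "\<rho> \<noteq> t - \<rho>a" using \<rho> \<rho>a by auto
      then show ?thesis
        using 1 runner_pair_iff[of n "c (t - \<rho>)" "c \<rho>"] tt unfolding cond_def sum_def by simp
    next
      case 2
      then have "2 * \<rho>a \<noteq> t" using \<rho> by auto
      then show ?thesis using 2 exceptional unfolding sum_def by auto
    next
      case 3
      then have "2 * \<rho>a \<noteq> t" "\<rho> = t - \<rho>a" using \<rho> by auto
      then show ?thesis using 3 exceptional tt unfolding sum_def by (auto simp: add.commute)
    next
      case 4
      then have "2 * \<rho>a = t" using \<rho> by auto
      then show ?thesis using 4 runner_self_exceptional_iff[OF e] tt qa unfolding cond_def sum_def by auto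
    qed
  qed
  have "(\<forall>\<rho>. 0 < \<rho> \<and> \<rho> < t \<longrightarrow> cond \<rho>) \<longleftrightarrow>
      (\<forall>\<rho>. 0 < \<rho> \<and> \<rho> < t \<longrightarrow> sum \<rho> \<and> ((\<rho> = \<rho>a \<or> t - \<rho> = \<rho>a) \<longrightarrow> Suc qa = c \<rho>a))"
    unfolding all_runner_pairs_iff[of t cond] using pair by blast
  also have "\<dots> \<longleftrightarrow> Suc qa = c \<rho>a \<and> paired_runner_sums t n c \<rho>a"
    unfolding paired_runner_sums_def sum_def[symmetric] using \<rho>a by blast
  finally show ?thesis unfolding cond_def .
qed

definition balanced_runners :: "nat \<Rightarrow> nat \<Rightarrow> (nat \<Rightarrow> nat) \<Rightarrow> bool" where
  "balanced_runners t n c \<longleftrightarrow> (\<exists>i0\<in>{1..t div 2}. c 0 = n \<and>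
     (\<forall>i\<in>{1..t div 2}. c i + c (t - i) =
        (if i = i0 then 2 * n + 1 + (if 2 * i0 = t then 1 else 0) else 2 * n)))"

lemma balanced_runners_iff_paired_sums:
  assumes t: "2 \<le> t"
  shows "balanced_runners t n c \<longleftrightarrow>
    c 0 = n \<and> (\<exists>\<rho>a. 0 < \<rho>a \<and> \<rho>a < t \<and> n < c \<rho>a \<and> paired_runner_sums t n c \<rho>a)"
proof
  assume "balanced_runners t n c"
  then obtain i0 where i0: "i0 \<in> {1..t div 2}" and c0: "c 0 = n"
    and sums: "\<And>i. i \<in> {1..t div 2} \<Longrightarrow>
      c i + c (t - i) = (if i = i0 then 2 * n + 1 + (if 2 * i0 = t then 1 else 0) else 2 * n)"
    unfolding balanced_runners_def by blast
  define \<rho>a where "\<rho>a = (if n < c i0 then i0 else t - i0)"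
  have \<rho>a: "0 < \<rho>a" "\<rho>a < t" "\<rho>a = i0 \<or> \<rho>a = t - i0" "t - \<rho>a = i0 \<or> t - \<rho>a = t - i0"
    unfolding \<rho>a_def using i0 t by auto
  have "n < c \<rho>a"
    using sums[OF i0] unfolding \<rho>a_def by (cases "2 * i0 = t") auto
  moreover have "paired_runner_sums t n c \<rho>a"
    unfolding paired_runner_sums_def
  proof (intro allI impI)
    fix \<rho> assume \<rho>: "0 < \<rho> \<and> \<rho> < t"
    define i where "i = min \<rho> (t - \<rho>)"
    have i: "i \<in> {1..t div 2}" unfolding i_def using \<rho> by (auto simp: min_def)
    have "c \<rho> + c (t - \<rho>) = c i + c (t - i)" unfolding i_def using \<rho> by (auto simp: min_def)
    also have "\<dots> = (if i = i0 then 2 * n + 1 + (if 2 * i0 = t then 1 else 0) else 2 * n)" by (rule sums[OF i])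
    also have "i = i0 \<longleftrightarrow> \<rho> = \<rho>a \<or> \<rho> = t - \<rho>a"
      unfolding i_def using \<rho> \<rho>a i0 by (auto simp: min_def)
    also have "2 * i0 = t \<longleftrightarrow> 2 * \<rho>a = t" using \<rho>a i0 by auto
    finally show "c \<rho> + c (t - \<rho>) =
        (if \<rho> = \<rho>a \<or> \<rho> = t - \<rho>a then 2 * n + 1 + (if 2 * \<rho>a = t then 1 else 0) else 2 * n)" .
  qed
  ultimately show "c 0 = n \<and> (\<exists>\<rho>a. 0 < \<rho>a \<and> \<rho>a < t \<and> n < c \<rho>a \<and> paired_runner_sums t n c \<rho>a)"
    using c0 \<rho>a by blast
next
  assume "c 0 = n \<and> (\<exists>\<rho>a. 0 < \<rho>a \<and> \<rho>a < t \<and> n < c \<rho>a \<and> paired_runner_sums t n c \<rho>a)"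
  then obtain \<rho>a where c0: "c 0 = n" and \<rho>a: "0 < \<rho>a" "\<rho>a < t"
    and sums: "paired_runner_sums t n c \<rho>a" by blast
  define i0 where "i0 = min \<rho>a (t - \<rho>a)"
  have "i0 \<in> {1..t div 2}" unfolding i0_def using \<rho>a by (auto simp: min_def)
  moreover have "c i + c (t - i) = (if i = i0 then 2 * n + 1 + (if 2 * i0 = t then 1 else 0) else 2 * n)"
    if i: "i \<in> {1..t div 2}" for i
  proof -
    have "i = i0 \<longleftrightarrow> i = \<rho>a \<or> i = t - \<rho>a" "2 * i0 = t \<longleftrightarrow> 2 * \<rho>a = t"
      unfolding i0_def using i \<rho>a by (auto simp: min_def)
    moreover have "0 < i" "i < t" using i t by auto
    ultimately show ?thesis using sums unfolding paired_runner_sums_def by simp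
  qed
  ultimately show "balanced_runners t n c" unfolding balanced_runners_def using c0 by blast
qed

lemma asymmetric_abacus_iff_balanced:
  assumes t: "2 \<le> t"
  shows "(\<exists>x. asymmetric_beta_set (t * n) (abacus t c) x) \<longleftrightarrow> balanced_runners t n c"
proof -
  let ?asym = "asymmetric_beta_set (t * n) (abacus t c)"
  have t0: "0 < t" using t by simp
  have "(\<exists>x. ?asym x) \<longleftrightarrow> (\<exists>\<rho>a<t. \<exists>qa. ?asym (\<rho>a + t * qa))"
  proof
    assume "\<exists>x. ?asym x"
    then obtain x where "?asym (x mod t + t * (x div t))" by auto
    moreover have "x mod t < t" using t by simp
    ultimately show "\<exists>\<rho>a<t. \<exists>qa. ?asym (\<rho>a + t * qa)" by blast
  qed blast
  also have "\<dots> \<longleftrightarrow> (\<exists>\<rho>a<t. \<exists>qa. c 0 = n \<and> 0 < \<rho>a \<and> n \<le> qa \<and> qa < c \<rho>a \<and>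
      Suc qa = c \<rho>a \<and> paired_runner_sums t n c \<rho>a)"
  proof -
    have "?asym (\<rho>a + t * qa) \<longleftrightarrow> c 0 = n \<and> 0 < \<rho>a \<and> n \<le> qa \<and> qa < c \<rho>a \<and>
        Suc qa = c \<rho>a \<and> paired_runner_sums t n c \<rho>a" if "\<rho>a < t" for \<rho>a qa
      unfolding asymmetric_abacus_iff_runners[OF t0 that]
      by (intro conj_cong refl runner_conditions_iff_sums[OF _ that]) simp_all
    then show ?thesis by blast
  qed
  also have "\<dots> \<longleftrightarrow> c 0 = n \<and> (\<exists>\<rho>a. 0 < \<rho>a \<and> \<rho>a < t \<and> n < c \<rho>a \<and> paired_runner_sums t n c \<rho>a)"
  proof (rule iffI)
    assume "\<exists>\<rho>a<t. \<exists>qa. c 0 = n \<and> 0 < \<rho>a \<and> n \<le> qa \<and> qa < c \<rho>a \<and>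
        Suc qa = c \<rho>a \<and> paired_runner_sums t n c \<rho>a"
    then show "c 0 = n \<and> (\<exists>\<rho>a. 0 < \<rho>a \<and> \<rho>a < t \<and> n < c \<rho>a \<and> paired_runner_sums t n c \<rho>a)"
      by auto
  next
    assume "c 0 = n \<and> (\<exists>\<rho>a. 0 < \<rho>a \<and> \<rho>a < t \<and> n < c \<rho>a \<and> paired_runner_sums t n c \<rho>a)"
    then obtain \<rho>a where "c 0 = n" "0 < \<rho>a" "\<rho>a < t" "n < c \<rho>a" "paired_runner_sums t n c \<rho>a" by blast
    moreover from this have "\<exists>qa. c 0 = n \<and> 0 < \<rho>a \<and> n \<le> qa \<and> qa < c \<rho>a \<and>
        Suc qa = c \<rho>a \<and> paired_runner_sums t n c \<rho>a"
      by (intro exI[of _ "c \<rho>a - 1"]) auto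
    ultimately show "\<exists>\<rho>a<t. \<exists>qa. c 0 = n \<and> 0 < \<rho>a \<and> n \<le> qa \<and> qa < c \<rho>a \<and>
        Suc qa = c \<rho>a \<and> paired_runner_sums t n c \<rho>a"
      by blast
  qed
  also have "\<dots> \<longleftrightarrow> balanced_runners t n c" by (rule balanced_runners_iff_paired_sums[OF t, symmetric])
  finally show ?thesis .
qed

theorem corollary3p7:
  fixes t n :: nat and lam :: "nat list"
  assumes "t \<ge> 2" and "n \<ge> 1"
    and "is_partition lam" and "length lam \<le> t * n + 1"
  shows "(\<exists>i0\<in>{1..t div 2}.
            ncount t lam (t * n + 1) 0 = n \<and>
            (\<forall>i\<in>{1..t div 2}.
               ncount t lam (t * n + 1) i + ncount t lam (t * n + 1) (t - i) =
                 (if i = i0 then 2 * n + 1 + (if 2 * i0 = t then 1 else 0) else 2 * n)))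
         \<longleftrightarrow> (\<exists>k. 1 \<le> k \<and> k \<le> rk (tcore t lam) \<and> asymmetric 1 0 k (tcore t lam))"
proof -
  let ?l = "t * n + 1" and ?core = "tcore t lam"
  have t: "1 \<le> t" using assms(1) by simp
  have counts: "ncount t lam ?l = runner_count t (beta_set lam ?l)"
    using ncount_eq_runner_count[OF assms(3)] by blast
  note core = beta_set_tcore[OF assms(3,4) t]
  have "(\<exists>k. 1 \<le> k \<and> k \<le> rk ?core \<and> asymmetric 1 0 k ?core) \<longleftrightarrow>
      (\<exists>x. asymmetric_beta_set (t * n) (beta_set ?core ?l) x)"
    by (rule asymmetric_iff_asymmetric_beta_set[OF core(1,2)])
  also have "\<dots> \<longleftrightarrow> balanced_runners t n (ncount t lam ?l)"
    unfolding core(3) counts[symmetric] by (rule asymmetric_abacus_iff_balanced[OF assms(1)])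
  finally show ?thesis unfolding balanced_runners_def by simp
qed

end
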